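(* Let $m\ge 1$ and let $X\subset \sqrt{m}\,\mathbb{S}^{m-1}=\{\bm{x}\in\mathbb{R}^m:\bm{x}\cdot\bm{x}=m\}$ be a spherical $2$-design with $|X|=n$ which is an $s$-distance set and whose degree $S$ equals $s$. Let $F_0,\dots,F_s$ be its projection matrices, let $m_s(\bm{x})=n(F_s)_{\bm{x},\bm{x}}$ for $\bm{x}\in X$, and let $q_s$ be the predegree polynomial of degree $s$ of $X$. Then \[ \mathrm{tr}\, F_s=\frac{1}{n}\sum_{\bm{x}\in X} m_s(\bm{x})\le q_s(m), \] and equality holds if and only if $X$ has the structure of a $Q$-polynomial association scheme with respect to the idempotents $F_0,\dots,F_s$.
   Context: Setting: $\bm{x}\cdot\bm{y}$ is the standard inner product on $\mathbb{R}^m$; $X$ is a finite subset of $\sqrt{m}\,\mathbb{S}^{m-1}$ with $n=|X|$. Put $A(X)=\{\bm{x}\cdot\bm{y}:\bm{x},\bm{y}\in X,\ \bm{x}\ne\bm{y}\}$ and $A'(X)=A(X)\cup\{m\}$; $X$ is an $s$-distance set if $|A(X)|=s$. $X$ is a spherical $2$-design if the average of every polynomial of degree at most $2$ over $X$ equals its average over the sphere with respect to the Lebesgue measure (equivalently, $\sum_{\bm{y}\in X}\bm{x}\cdot\bm{y}=0$ and $\frac1n\sum_{\bm{z}\in X}(\bm{x}\cdot\bm{z})(\bm{z}\cdot\bm{y})=\bm{x}\cdot\bm{y}$ for all $\bm{x},\bm{y}\in X$). Functions: $C(X)$ is the space of real functions on $X$ with inner product $(f,g)=\frac1n\sum_{\bm{x}\in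 X}f(\bm{x})g(\bm{x})$. For $p\in\mathbb{R}[t]$ and $\bm{a}\in X$, $\zeta_{\bm{a}}(p)(\bm{x})=p(\bm{a}\cdot\bm{x})$. $\mathrm{Pol}_0(X)$ = constant functions; $\mathrm{Pol}_1(X)=\mathrm{Span}\{\zeta_{\bm a}(p):\bm a\in X,\deg p\le 1\}$; $\mathrm{Pol}_k(X)=\mathrm{Span}\{fg: f\in\mathrm{Pol}_1(X), g\in\mathrm{Pol}_{k-1}(X)\}$ for $k\ge2$ (equivalently $\mathrm{Pol}_k(X)=\mathrm{Span}\{\zeta_{\bm a}(p):\bm a\in X,\deg p\le k\}$). The degree of $X$ is $S=\min\{i:\mathrm{Pol}_i(X)=C(X)\}$. $\mathrm{Harm}_0(X)=\mathrm{Pol}_0(X)$ and $\mathrm{Harm}_k(X)=\mathrm{Pol}_k(X)\cap\mathrm{Pol}_{k-1}(X)^\perp$ for $k\ge1$. Matrices $M$ indexed by $X\times X$ act on $C(X)$ by $(Mf)(\bm x)=\sum_{\bm y}M_{\bm x,\bm y}f(\bm y)$; $F_i$ ($0\le i\le S$) is the matrix of the orthogonal projection of $C(X)$ onto $\mathrm{Harm}_i(X)$ (the projection matrices of $X$). Gram matrix and polynomials: $G=\frac1n(\bm x\cdot\bm y)_{\bm x,\bm y\in X}$. For a matrix $M$ and $p\in\mathbb{R}[t]$, $p(M^\circ)$ is the matrix obtained by applying $p$ entrywise. For $\alpha\in A'(X)$, $\kappa_\alpha=|\{(\bm x,\bm y)\in X^2:\bm x\cdot\bm y=\alpha\}|$.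 On $\mathbb{R}[t]/(\prod_{\alpha\in A'(X)}(t-\alpha))$ define $\langle p,q\rangle=\frac1{n^2}\sum_{\alpha\in A'(X)}\kappa_\alpha p(\alpha)q(\alpha)$. The predegree polynomials $q_0,\dots,q_s$ of $X$ are the polynomials with $\deg q_k=k$ and $\langle q_k,q_h\rangle=\delta_{k,h}q_k(m)$. Association schemes: for $\alpha\in A'(X)$ let $R_\alpha=\{(\bm x,\bm y)\in X^2:\bm x\cdot\bm y=\alpha\}$. "$X$ has the structure of a $Q$-polynomial association scheme with respect to the idempotents $F_0,\dots,F_s$" means: $(X,\{R_\alpha\}_{\alpha\in A'(X)})$ is a symmetric association scheme (its adjacency matrices span an algebra closed under matrix multiplication, with the usual axioms), its primitive idempotents are $F_0,\dots,F_s$, and for each $i$ there is a polynomial $v_i^*$ of degree $i$ with $nF_i=v_i^*((nF_1)^\circ)$. *)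

theory Defs
  imports "HOL-Analysis.Analysis" "HOL-Computational_Algebra.Polynomial"
begin

text \<open>Points are vectors of type real^'m, so m = CARD('m) >= 1.
  Functions in C(X) are functions real^'m => real vanishing outside X;
  matrices indexed by X x X are functions of two arguments vanishing outside X x X.\<close>

definition inner_set :: "(real^'m) set \<Rightarrow> real set" where
  "inner_set X = {x \<bullet> y | x y. x \<in> X \<and> y \<in> X \<and> x \<noteq> y}"

definition inner_set' :: "(real^'m) set \<Rightarrow> real set" where
  "inner_set' X = insert (real CARD('m)) (inner_set X)"

definition spherical_2_design :: "(real^'m) set \<Rightarrow> bool" where
  "spherical_2_design X \<longleftrightarrow>
     (\<forall>x\<in>X. (\<Sum>y\<in>X. x \<bullet> y) = 0) \<and>
     (\<forall>x\<in>X. \<forall>y\<in>X. (\<Sum>z\<in>X. (x \<bullet> z) * (z \<bullet> y)) / real (card X) = x \<bullet> y)"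

definition CX :: "(real^'m) set \<Rightarrow> (real^'m \<Rightarrow> real) set" where
  "CX X = {f. \<forall>x. x \<notin> X \<longrightarrow> f x = 0}"

definition ipX :: "(real^'m) set \<Rightarrow> (real^'m \<Rightarrow> real) \<Rightarrow> (real^'m \<Rightarrow> real) \<Rightarrow> real" where
  "ipX X f g = (\<Sum>x\<in>X. f x * g x) / real (card X)"

text \<open>Pol_k(X) = span of the functions zeta_a(p), a in X, deg p <= k (restricted to X).
  A finite linear combination of such functions can be grouped by the point a, and
  a linear combination of polynomials of degree <= k has degree <= k, so the span
  is exactly the set below.\<close>
definition PolX :: "(real^'m) set \<Rightarrow> nat \<Rightarrow> (real^'m \<Rightarrow> real) set" where
  "PolX X k = {f. \<exists>p :: real^'m \<Rightarrow> real poly. (\<forall>a. degree (p a) \<le> k) \<and>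
       (\<forall>x. f x = (if x \<in> X then (\<Sum>a\<in>X. poly (p a) (a \<bullet> x)) else 0))}"

definition HarmX :: "(real^'m) set \<Rightarrow> nat \<Rightarrow> (real^'m \<Rightarrow> real) set" where
  "HarmX X k = (if k = 0 then PolX X 0
     else PolX X k \<inter> {f. \<forall>g\<in>PolX X (k - 1). ipX X f g = 0})"

definition design_degree :: "(real^'m) set \<Rightarrow> nat" where
  "design_degree X = (LEAST i. PolX X i = CX X)"

definition mat_app :: "(real^'m) set \<Rightarrow> (real^'m \<Rightarrow> real^'m \<Rightarrow> real) \<Rightarrow> (real^'m \<Rightarrow> real) \<Rightarrow> (real^'m \<Rightarrow> real)" where
  "mat_app X M f = (\<lambda>x. if x \<in> X then (\<Sum>y\<in>X. M x y * f y) else 0)"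

definition mat_mult :: "(real^'m) set \<Rightarrow> (real^'m \<Rightarrow> real^'m \<Rightarrow> real) \<Rightarrow> (real^'m \<Rightarrow> real^'m \<Rightarrow> real) \<Rightarrow> (real^'m \<Rightarrow> real^'m \<Rightarrow> real)" where
  "mat_mult X M N = (\<lambda>x y. \<Sum>z\<in>X. M x z * N z y)"

definition is_matX :: "(real^'m) set \<Rightarrow> (real^'m \<Rightarrow> real^'m \<Rightarrow> real) \<Rightarrow> bool" where
  "is_matX X M \<longleftrightarrow> (\<forall>x y. x \<notin> X \<or> y \<notin> X \<longrightarrow> M x y = 0)"

definition proj_matrix :: "(real^'m) set \<Rightarrow> (real^'m \<Rightarrow> real) set \<Rightarrow> (real^'m \<Rightarrow> real^'m \<Rightarrow> real)" where
  "proj_matrix X V = (THE M. is_matX X M \<and>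
     (\<forall>f\<in>CX X. mat_app X M f \<in> V \<and>
        (\<forall>g\<in>V. ipX X (\<lambda>x. f x - mat_app X M f x) g = 0)))"

definition projF :: "(real^'m) set \<Rightarrow> nat \<Rightarrow> (real^'m \<Rightarrow> real^'m \<Rightarrow> real)" where
  "projF X i = proj_matrix X (HarmX X i)"

definition traceX :: "(real^'m) set \<Rightarrow> (real^'m \<Rightarrow> real^'m \<Rightarrow> real) \<Rightarrow> real" where
  "traceX X M = (\<Sum>x\<in>X. M x x)"

definition kappa :: "(real^'m) set \<Rightarrow> real \<Rightarrow> nat" where
  "kappa X \<alpha> = card {(x, y). x \<in> X \<and> y \<in> X \<and> x \<bullet> y = \<alpha>}"

definition pred_ip :: "(real^'m) set \<Rightarrow> real poly \<Rightarrow> real poly \<Rightarrow> real" where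
  "pred_ip X p q = (\<Sum>\<alpha>\<in>inner_set' X. real (kappa X \<alpha>) * poly p \<alpha> * poly q \<alpha>) / (real (card X))\<^sup>2"

definition predegree_polys :: "(real^'m) set \<Rightarrow> nat \<Rightarrow> (nat \<Rightarrow> real poly) \<Rightarrow> bool" where
  "predegree_polys X s q \<longleftrightarrow>
     (\<forall>k\<le>s. q k \<noteq> 0 \<and> degree (q k) = k) \<and>
     (\<forall>k\<le>s. \<forall>h\<le>s. pred_ip X (q k) (q h) = (if k = h then poly (q k) (real CARD('m)) else 0))"

definition adjX :: "(real^'m) set \<Rightarrow> real \<Rightarrow> (real^'m \<Rightarrow> real^'m \<Rightarrow> real)" where
  "adjX X \<alpha> = (\<lambda>x y. if x \<in> X \<and> y \<in> X \<and> x \<bullet> y = \<alpha> then 1 else 0)"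

definition bose_mesner :: "(real^'m) set \<Rightarrow> (real^'m \<Rightarrow> real^'m \<Rightarrow> real) set" where
  "bose_mesner X = {M. \<exists>c. \<forall>x y. M x y = (\<Sum>\<alpha>\<in>inner_set' X. c \<alpha> * adjX X \<alpha> x y)}"

definition sym_assoc_scheme :: "(real^'m) set \<Rightarrow> bool" where
  "sym_assoc_scheme X \<longleftrightarrow>
     (\<forall>x y. adjX X (real CARD('m)) x y = (if x \<in> X \<and> y \<in> X \<and> x = y then 1 else 0)) \<and>
     (\<forall>\<alpha>\<in>inner_set' X. \<exists>x\<in>X. \<exists>y\<in>X. x \<bullet> y = \<alpha>) \<and>
     (\<forall>x\<in>X. \<forall>y\<in>X. \<exists>!\<alpha>. \<alpha> \<in> inner_set' X \<and> x \<bullet> y = \<alpha>) \<and>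
     (\<forall>\<alpha>\<in>inner_set' X. \<forall>x y. adjX X \<alpha> x y = adjX X \<alpha> y x) \<and>
     (\<forall>\<alpha>\<in>inner_set' X. \<forall>\<beta>\<in>inner_set' X. mat_mult X (adjX X \<alpha>) (adjX X \<beta>) \<in> bose_mesner X)"

definition zero_matX :: "(real^'m) set \<Rightarrow> (real^'m \<Rightarrow> real^'m \<Rightarrow> real) \<Rightarrow> bool" where
  "zero_matX X M \<longleftrightarrow> (\<forall>x\<in>X. \<forall>y\<in>X. M x y = 0)"

definition idempotent_BM :: "(real^'m) set \<Rightarrow> (real^'m \<Rightarrow> real^'m \<Rightarrow> real) \<Rightarrow> bool" where
  "idempotent_BM X E \<longleftrightarrow> E \<in> bose_mesner X \<and> \<not> zero_matX X E \<and> mat_mult X E E = E"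

definition primitive_idempotent :: "(real^'m) set \<Rightarrow> (real^'m \<Rightarrow> real^'m \<Rightarrow> real) \<Rightarrow> bool" where
  "primitive_idempotent X E \<longleftrightarrow> idempotent_BM X E \<and>
     \<not> (\<exists>E1 E2. idempotent_BM X E1 \<and> idempotent_BM X E2 \<and> zero_matX X (mat_mult X E1 E2) \<and>
           E = (\<lambda>x y. E1 x y + E2 x y))"

definition Q_polynomial_scheme :: "(real^'m) set \<Rightarrow> nat \<Rightarrow> bool" where
  "Q_polynomial_scheme X s \<longleftrightarrow> sym_assoc_scheme X \<and>
     {projF X i | i. i \<le> s} = {E. primitive_idempotent X E} \<and>
     (\<forall>i\<le>s. \<exists>v :: real poly. v \<noteq> 0 \<and> degree v = i \<and>
        (\<forall>x\<in>X. \<forall>y\<in>X. real (card X) * projF X i x y = poly v (real (card X) * projF X 1 x y)))"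

end

theory Submission
  imports Defs
begin

text \<open>Let \<open>P\<^sub>k\<close> be the projection onto \<open>Pol\<^sub>k(X)\<close>, so that \<open>F\<^sub>i = P\<^sub>i - P\<^sub>i\<^sub>-\<^sub>1\<close>. Since \<open>|A(X)| = s\<close>,
  an indicator polynomial of degree \<open>s\<close> shows \<open>Pol\<^sub>s(X) = C(X)\<close>, hence \<open>F\<^sub>s = I - P\<^sub>s\<^sub>-\<^sub>1\<close>.
  Put \<open>K = q\<^sub>0 + \<dots> + q\<^sub>s\<^sub>-\<^sub>1\<close>, the reproducing kernel of the polynomials of degree \<open>< s\<close> for the
  predegree inner product. Expanding \<open>n \<delta>\<^sub>\<alpha>\<^sub>,\<^sub>m\<close> in the basis \<open>q\<^sub>k\<close> gives \<open>q\<^sub>s(m) = n - K(m)\<close>, and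
  \<open>\<Sum>\<^sub>x\<^sub>,\<^sub>y (n P\<^sub>s\<^sub>-\<^sub>1(x,y) - K(x \<bullet> y))\<^sup>2 = n\<^sup>2 (tr P\<^sub>s\<^sub>-\<^sub>1 - K(m))\<close> because \<open>P\<^sub>s\<^sub>-\<^sub>1\<close> is an orthogonal
  projection fixing the columns of \<open>K(x \<bullet> y)\<close>. This gives the inequality, with equality iff
  \<open>n P\<^sub>s\<^sub>-\<^sub>1 = K(x \<bullet> y)\<close>.

  In the equality case a descending induction, driven by the three-term recurrence of the \<open>q\<^sub>k\<close>,
  gives \<open>n F\<^sub>j = q\<^sub>j(x \<bullet> y)\<close> for all \<open>j\<close>; as \<open>n F\<^sub>1 = x \<bullet> y\<close> for a 2-design, the \<open>F\<^sub>j\<close> are then the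
  primitive idempotents of the Bose--Mesner algebra and \<open>n F\<^sub>j = q\<^sub>j((n F\<^sub>1)\<^sup>\<circ>)\<close>. Conversely, for a
  \<open>Q\<close>-polynomial scheme \<open>n P\<^sub>s\<^sub>-\<^sub>1 = w(x \<bullet> y)\<close> with \<open>deg w < s\<close>, and \<open>\<langle>K - w, K - w\<rangle> \<ge> 0\<close> yields
  \<open>tr P\<^sub>s\<^sub>-\<^sub>1 \<le> K(m)\<close>.\<close>

definition inner_on :: "(real^'m) set \<Rightarrow> (real^'m \<Rightarrow> real) \<Rightarrow> (real^'m \<Rightarrow> real) \<Rightarrow> real" where
  "inner_on X f g = (\<Sum>x\<in>X. f x * g x)"

definition zero_ext :: "(real^'m) set \<Rightarrow> (real^'m \<Rightarrow> real) \<Rightarrow> (real^'m \<Rightarrow> real)" where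
  "zero_ext X f = (\<lambda>x. if x \<in> X then f x else 0)"

definition span_on :: "(real^'m) set \<Rightarrow> 'i set \<Rightarrow> ('i \<Rightarrow> real^'m \<Rightarrow> real) \<Rightarrow> (real^'m \<Rightarrow> real) set" where
  "span_on X I G = {f. \<exists>c. f = zero_ext X (\<lambda>x. \<Sum>i\<in>I. c i * G i x)}"

definition is_orth_proj :: "(real^'m) set \<Rightarrow> (real^'m \<Rightarrow> real) set \<Rightarrow> (real^'m \<Rightarrow> real^'m \<Rightarrow> real) \<Rightarrow> bool" where
  "is_orth_proj X V P \<longleftrightarrow> is_matX X P \<and> (\<forall>x y. P x y = P y x) \<and>
    (\<forall>f\<in>CX X. mat_app X P f \<in> V \<and> (\<forall>g\<in>V. inner_on X (\<lambda>x. f x - mat_app X P f x) g = 0))"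

lemma inner_on_commute: "inner_on X f g = inner_on X g f"
  unfolding inner_on_def by (simp add: mult.commute)

lemma inner_on_diff_left: "inner_on X (\<lambda>x. f x - g x) h = inner_on X f h - inner_on X g h"
  unfolding inner_on_def by (simp add: algebra_simps sum_subtractf)

lemma inner_on_diff_right: "inner_on X h (\<lambda>x. f x - g x) = inner_on X h f - inner_on X h g"
  unfolding inner_on_def by (simp add: algebra_simps sum_subtractf)

lemma inner_on_self_eq_0:
  assumes "finite X" "inner_on X f f = 0" "x \<in> X" shows "f x = 0"
  using sum_nonneg_eq_0_iff[of X "\<lambda>x. f x * f x"] assms unfolding inner_on_def by auto

lemma CX_eq_0:
  assumes "finite X" "f \<in> CX X" "inner_on X f f = 0" shows "f = (\<lambda>x. 0)"
  using inner_on_self_eq_0[OF assms(1,3)] assms(2) unfolding CX_def by auto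

lemma mat_app_CX: "mat_app X M f \<in> CX X"
  unfolding CX_def mat_app_def by auto

lemma zero_ext_CX: "zero_ext X f \<in> CX X"
  unfolding CX_def zero_ext_def by auto

lemma span_on_CX: "span_on X I G \<subseteq> CX X"
  unfolding span_on_def using zero_ext_CX by blast

lemma span_on_add: "f \<in> span_on X I G \<Longrightarrow> g \<in> span_on X I G \<Longrightarrow> (\<lambda>x. f x + g x) \<in> span_on X I G"
proof -
  assume "f \<in> span_on X I G" "g \<in> span_on X I G"
  then obtain c d where "f = zero_ext X (\<lambda>x. \<Sum>i\<in>I. c i * G i x)" "g = zero_ext X (\<lambda>x. \<Sum>i\<in>I. d i * G i x)"
    unfolding span_on_def by blast
  thus ?thesis unfolding span_on_def
    by (intro CollectI exI[of _ "\<lambda>i. c i + d i"]) (auto simp: zero_ext_def algebra_simps sum.distrib)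
qed

lemma span_on_scale: "f \<in> span_on X I G \<Longrightarrow> (\<lambda>x. a * f x) \<in> span_on X I G"
proof -
  assume "f \<in> span_on X I G"
  then obtain c where "f = zero_ext X (\<lambda>x. \<Sum>i\<in>I. c i * G i x)"
    unfolding span_on_def by blast
  thus ?thesis unfolding span_on_def
    by (intro CollectI exI[of _ "\<lambda>i. a * c i"]) (auto simp: zero_ext_def algebra_simps sum_distrib_left)
qed

lemma span_on_diff: "f \<in> span_on X I G \<Longrightarrow> g \<in> span_on X I G \<Longrightarrow> (\<lambda>x. f x - g x) \<in> span_on X I G"
  using span_on_add[of f X I G "\<lambda>x. (-1) * g x"] span_on_scale[of g X I G "-1"] by simp

lemma mat_app_diff: "mat_app X M (\<lambda>x. f x - g x) = (\<lambda>x. mat_app X M f x - mat_app X M g x)"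
  unfolding mat_app_def by (auto simp: algebra_simps sum_subtractf)

lemma mat_app_scale: "mat_app X M (\<lambda>x. a * f x) = (\<lambda>x. a * mat_app X M f x)"
  unfolding mat_app_def by (auto simp: algebra_simps sum_distrib_left)

lemma mat_app_sum: "mat_app X M (\<lambda>z. \<Sum>k\<in>I. f k z) = (\<lambda>x. \<Sum>k\<in>I. mat_app X M (f k) x)"
proof
  fix x
  have "(\<Sum>y\<in>X. M x y * (\<Sum>k\<in>I. f k y)) = (\<Sum>k\<in>I. \<Sum>y\<in>X. M x y * f k y)"
    by (simp add: sum_distrib_left) (rule sum.swap)
  thus "mat_app X M (\<lambda>z. \<Sum>k\<in>I. f k z) x = (\<Sum>k\<in>I. mat_app X M (f k) x)"
    unfolding mat_app_def by simp
qed

lemma mat_app_mdiff: "mat_app X (\<lambda>x y. A x y - B x y) f = (\<lambda>x. mat_app X A f x - mat_app X B f x)"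
  unfolding mat_app_def by (auto simp: algebra_simps sum_subtractf)

lemma is_orth_proj_rank_one_update:
  assumes P: "is_orth_proj X V P" and r: "r \<in> CX X"
    and r_orth: "\<And>g. g \<in> V \<Longrightarrow> inner_on X r g = 0" and r_nz: "inner_on X r r \<noteq> 0"
  shows "is_orth_proj X {\<lambda>x. a * r x + k x | a k. k \<in> V} (\<lambda>x y. P x y + r x * r y / inner_on X r r)"
proof -
  have Pf: "mat_app X P f \<in> V" "\<And>g. g \<in> V \<Longrightarrow> inner_on X (\<lambda>x. f x - mat_app X P f x) g = 0"
    if "f \<in> CX X" for f
    using P that unfolding is_orth_proj_def by blast+
  have Pmat: "is_matX X P" "\<And>x y. P x y = P y x" using P unfolding is_orth_proj_def by auto
  define d where "d = inner_on X r r"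
  define P' where "P' = (\<lambda>x y. P x y + r x * r y / d)"
  have dne: "d \<noteq> 0" using r_nz d_def by simp
  have app: "mat_app X P' f = (\<lambda>x. mat_app X P f x + (inner_on X r f / d) * r x)" for f
  proof
    fix x
    show "mat_app X P' f x = mat_app X P f x + (inner_on X r f / d) * r x"
      using r unfolding mat_app_def P'_def inner_on_def CX_def
      by (auto simp: algebra_simps sum.distrib sum_distrib_left sum_divide_distrib)
  qed
  show ?thesis
    unfolding d_def[symmetric] P'_def[symmetric] is_orth_proj_def
  proof (intro conjI allI ballI)
    show "is_matX X P'" using Pmat(1) r unfolding is_matX_def P'_def CX_def by auto
    show "P' x y = P' y x" for x y using Pmat(2) unfolding P'_def by (simp add: mult.commute)
    fix f assume f: "f \<in> CX X"
    have "mat_app X P' f = (\<lambda>x. (inner_on X r f / d) * r x + mat_app X P f x)"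
      unfolding app by (simp add: add.commute)
    thus "mat_app X P' f \<in> {\<lambda>x. a * r x + k x | a k. k \<in> V}"
      using Pf(1)[OF f] by blast
    fix g assume "g \<in> {\<lambda>x. a * r x + k x | a k. k \<in> V}"
    then obtain a k where k: "k \<in> V" "g = (\<lambda>x. a * r x + k x)" by blast
    define lam where "lam = inner_on X r f / d"
    have "inner_on X (\<lambda>x. f x - mat_app X P' f x) g =
          a * (inner_on X f r - inner_on X (mat_app X P f) r - lam * d)
          + (inner_on X (\<lambda>x. f x - mat_app X P f x) k - lam * inner_on X r k)"
      unfolding app k(2) lam_def[symmetric]
      by (simp add: inner_on_def d_def algebra_simps sum.distrib sum_subtractf sum_distrib_left)
    also have "\<dots> = 0"
      using Pf(2)[OF f k(1)] r_orth[OF k(1)] r_orth[OF Pf(1)[OF f]] dne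
      by (simp add: inner_on_commute[of X r] lam_def)
    finally show "inner_on X (\<lambda>x. f x - mat_app X P' f x) g = 0" .
  qed
qed

lemma is_orth_proj_extend:
  assumes fin: "finite X" and P: "is_orth_proj X V P" and r: "r \<in> CX X"
    and r_orth: "\<And>g. g \<in> V \<Longrightarrow> inner_on X r g = 0"
  shows "\<exists>P'. is_orth_proj X {\<lambda>x. a * r x + k x | a k. k \<in> V} P'"
proof (cases "inner_on X r r = 0")
  case True
  hence "r = (\<lambda>x. 0)" by (rule CX_eq_0[OF fin r])
  hence "{\<lambda>x. a * r x + k x | a k. k \<in> V} = V" by auto
  thus ?thesis using P by auto
next
  case False
  thus ?thesis using is_orth_proj_rank_one_update[OF P r r_orth] by blast
qed

lemma span_on_insert:
  assumes P: "is_orth_proj X (span_on X I G) P" and I: "finite I" and j: "j \<notin> I"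
  defines "r \<equiv> \<lambda>x. zero_ext X (G j) x - mat_app X P (zero_ext X (G j)) x"
  shows "span_on X (insert j I) G = {\<lambda>x. a * r x + k x | a k. k \<in> span_on X I G}"
proof -
  have PG: "mat_app X P (zero_ext X (G j)) \<in> span_on X I G"
    using P zero_ext_CX unfolding is_orth_proj_def by blast
  show ?thesis
proof (intro equalityI subsetI)
  fix h
  assume "h \<in> span_on X (insert j I) G"
  then obtain c where hc: "h = zero_ext X (\<lambda>x. \<Sum>i\<in>insert j I. c i * G i x)" unfolding span_on_def by blast
  define k0 where "k0 = zero_ext X (\<lambda>x. \<Sum>i\<in>I. c i * G i x)"
  have "k0 \<in> span_on X I G" unfolding k0_def span_on_def by blast
  define k where "k = (\<lambda>x. c j * mat_app X P (zero_ext X (G j)) x + k0 x)"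
  have "k \<in> span_on X I G"
    unfolding k_def by (intro span_on_add span_on_scale PG \<open>k0 \<in> span_on X I G\<close>)
  moreover have "h = (\<lambda>x. c j * r x + k x)"
    using I j unfolding hc r_def k_def k0_def zero_ext_def by (auto simp: algebra_simps)
  ultimately show "h \<in> {\<lambda>x. a * r x + k x | a k. k \<in> span_on X I G}" by blast
next
  fix h assume "h \<in> {\<lambda>x. a * r x + k x | a k. k \<in> span_on X I G}"
  then obtain a k where h: "h = (\<lambda>x. a * r x + k x)" and k: "k \<in> span_on X I G" by blast
  obtain c where kc: "k = zero_ext X (\<lambda>x. \<Sum>i\<in>I. c i * G i x)" using k unfolding span_on_def by blast
  obtain c' where pc: "mat_app X P (zero_ext X (G j)) = zero_ext X (\<lambda>x. \<Sum>i\<in>I. c' i * G i x)"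
    using PG unfolding span_on_def by blast
  define c'' where "c'' = (\<lambda>i. c i - a * c' i)(j := a)"
  have s1: "(\<Sum>i\<in>I. c'' i * G i x) = (\<Sum>i\<in>I. (c i - a * c' i) * G i x)" for x
    using j by (intro sum.cong) (auto simp: c''_def)
  have "h = zero_ext X (\<lambda>x. \<Sum>i\<in>insert j I. c'' i * G i x)"
  proof
    fix x
    show "h x = zero_ext X (\<lambda>x. \<Sum>i\<in>insert j I. c'' i * G i x) x"
      using I j s1[of x] fun_cong[OF pc, of x]
      by (simp add: h r_def kc zero_ext_def c''_def algebra_simps sum_subtractf sum_distrib_left)
  qed
  thus "h \<in> span_on X (insert j I) G" unfolding span_on_def by blast
qed
qed

lemma orth_proj_exists:
  assumes "finite X" "finite I"
  shows "\<exists>P. is_orth_proj X (span_on X I G) P"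
  using assms(2)
proof (induction I rule: finite_induct)
  case empty
  have V: "span_on X {} G = {\<lambda>x. 0}"
    unfolding span_on_def zero_ext_def by (auto simp: fun_eq_iff)
  show ?case
    by (rule exI[of _ "\<lambda>x y. 0"]) (auto simp: V is_orth_proj_def is_matX_def mat_app_def inner_on_def)
next
  case (insert j I)
  then obtain P where P: "is_orth_proj X (span_on X I G) P" by blast
  define r where "r = (\<lambda>x. zero_ext X (G j) x - mat_app X P (zero_ext X (G j)) x)"
  have "r \<in> CX X" using zero_ext_CX[of X "G j"] mat_app_CX[of X P] unfolding r_def CX_def by auto
  moreover have "inner_on X r g = 0" if "g \<in> span_on X I G" for g
    using P zero_ext_CX[of X "G j"] that unfolding is_orth_proj_def r_def by blast
  ultimately obtain P' where "is_orth_proj X {\<lambda>x. a * r x + k x | a k. k \<in> span_on X I G} P'"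
    using is_orth_proj_extend[OF assms(1) P] by blast
  thus ?case unfolding r_def span_on_insert[OF P insert.hyps(1,2)] by blast
qed

lemma poly_eq_sum_upto:
  fixes p :: "real poly" assumes "degree p \<le> k" shows "poly p t = (\<Sum>i\<le>k. coeff p i * t ^ i)"
proof -
  have "poly p t = (\<Sum>i\<le>degree p. coeff p i * t ^ i)" by (simp add: poly_altdef)
  also have "\<dots> = (\<Sum>i\<le>k. coeff p i * t ^ i)"
    using assms by (intro sum.mono_neutral_left) (auto simp: coeff_eq_0)
  finally show ?thesis .
qed

definition zeta_monomial :: "(real^'m) \<times> nat \<Rightarrow> real^'m \<Rightarrow> real" where
  "zeta_monomial = (\<lambda>(a,i) x. (a \<bullet> x) ^ i)"

lemma PolX_subset_span_on: "PolX X k \<subseteq> span_on X (X \<times> {..k}) zeta_monomial"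
proof
  fix f assume "f \<in> PolX X k"
  then obtain p where p: "\<And>a. degree (p a) \<le> k"
    "\<And>x. f x = (if x \<in> X then (\<Sum>a\<in>X. poly (p a) (a \<bullet> x)) else 0)"
    unfolding PolX_def by blast
  have "f = zero_ext X (\<lambda>x. \<Sum>ai\<in>X \<times> {..k}. (\<lambda>(a,i). coeff (p a) i) ai * zeta_monomial ai x)"
  proof
    fix x
    have "(\<Sum>a\<in>X. poly (p a) (a \<bullet> x)) = (\<Sum>a\<in>X. \<Sum>i\<le>k. coeff (p a) i * (a \<bullet> x) ^ i)"
      using poly_eq_sum_upto[OF p(1)] by simp
    also have "\<dots> = (\<Sum>(a,i)\<in>X \<times> {..k}. coeff (p a) i * (a \<bullet> x) ^ i)"
      by (rule sum.cartesian_product)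
    also have "\<dots> = (\<Sum>ai\<in>X \<times> {..k}. (\<lambda>(a,i). coeff (p a) i) ai * zeta_monomial ai x)"
      by (intro sum.cong) (auto simp: zeta_monomial_def)
    finally show "f x = zero_ext X (\<lambda>x. \<Sum>ai\<in>X \<times> {..k}. (\<lambda>(a,i). coeff (p a) i) ai * zeta_monomial ai x) x"
      using p(2) by (simp add: zero_ext_def)
  qed
  thus "f \<in> span_on X (X \<times> {..k}) zeta_monomial" unfolding span_on_def by blast
qed

lemma span_on_subset_PolX: "span_on X (X \<times> {..k}) zeta_monomial \<subseteq> PolX X k"
proof
  fix f assume "f \<in> span_on X (X \<times> {..k}) zeta_monomial"
  then obtain c where c: "f = zero_ext X (\<lambda>x. \<Sum>ai\<in>X \<times> {..k}. c ai * zeta_monomial ai x)"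
    unfolding span_on_def by blast
  define p where "p = (\<lambda>a. \<Sum>i\<le>k. monom (c (a,i)) i)"
  have dp: "degree (p a) \<le> k" for a
    unfolding p_def by (intro degree_sum_le) (auto intro: order.trans[OF degree_monom_le])
  have "f x = (if x \<in> X then (\<Sum>a\<in>X. poly (p a) (a \<bullet> x)) else 0)" for x
  proof -
    have "(\<Sum>a\<in>X. poly (p a) (a \<bullet> x)) = (\<Sum>a\<in>X. \<Sum>i\<le>k. c (a,i) * (a \<bullet> x) ^ i)"
      by (simp add: p_def poly_sum poly_monom)
    also have "\<dots> = (\<Sum>(a,i)\<in>X \<times> {..k}. c (a,i) * (a \<bullet> x) ^ i)"
      by (rule sum.cartesian_product)
    also have "\<dots> = (\<Sum>ai\<in>X \<times> {..k}. c ai * zeta_monomial ai x)"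
      by (intro sum.cong) (auto simp: zeta_monomial_def)
    finally show ?thesis using c by (simp add: zero_ext_def)
  qed
  thus "f \<in> PolX X k" unfolding PolX_def using dp by blast
qed

lemma PolX_span: "PolX X k = span_on X (X \<times> {..k}) zeta_monomial"
  using PolX_subset_span_on span_on_subset_PolX by (rule equalityI)

lemma PolX_CX: "PolX X k \<subseteq> CX X"
  unfolding PolX_span by (rule span_on_CX)

lemma PolX_diff: "f \<in> PolX X k \<Longrightarrow> g \<in> PolX X k \<Longrightarrow> (\<lambda>x. f x - g x) \<in> PolX X k"
  unfolding PolX_span by (rule span_on_diff)
lemma PolX_mono: "k \<le> k' \<Longrightarrow> PolX X k \<subseteq> PolX X k'"
  unfolding PolX_def by (auto intro: order.trans)

lemma PolX_zeta:
  assumes "finite X" "a \<in> X" "degree p \<le> k"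
  shows "zero_ext X (\<lambda>x. poly p (a \<bullet> x)) \<in> PolX X k"
proof -
  define pp where "pp = (\<lambda>b. if b = a then p else 0)"
  have "zero_ext X (\<lambda>x. poly p (a \<bullet> x)) x = (if x \<in> X then (\<Sum>b\<in>X. poly (pp b) (b \<bullet> x)) else 0)" for x
  proof -
    have "(\<Sum>b\<in>X. poly (pp b) (b \<bullet> x)) = poly p (a \<bullet> x)"
    proof -
      have "(\<Sum>b\<in>X. poly (pp b) (b \<bullet> x)) = (\<Sum>b\<in>X. if b = a then poly p (a \<bullet> x) else 0)"
        by (intro sum.cong) (auto simp: pp_def)
      thus ?thesis using assms by simp
    qed
    thus ?thesis by (simp add: zero_ext_def)
  qed
  moreover have "degree (pp b) \<le> k" for b using assms by (simp add: pp_def)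
  ultimately show ?thesis unfolding PolX_def by blast
qed

lemma is_orth_proj_inner:
  assumes "is_orth_proj X V P" "f \<in> CX X" "g \<in> V"
  shows "inner_on X (mat_app X P f) g = inner_on X f g"
  using assms unfolding is_orth_proj_def by (auto simp: inner_on_diff_left)

lemma is_orth_proj_in: "is_orth_proj X V P \<Longrightarrow> f \<in> CX X \<Longrightarrow> mat_app X P f \<in> V"
  unfolding is_orth_proj_def by blast

lemma is_orth_proj_fixes:
  assumes fin: "finite X" and P: "is_orth_proj X V P" and VC: "V \<subseteq> CX X"
    and Vd: "\<And>f g. f \<in> V \<Longrightarrow> g \<in> V \<Longrightarrow> (\<lambda>x. f x - g x) \<in> V" and g: "g \<in> V"
  shows "mat_app X P g = g"
proof -
  have gC: "g \<in> CX X" using g VC by blast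
  define h where "h = (\<lambda>x. g x - mat_app X P g x)"
  have hV: "h \<in> V" unfolding h_def using Vd[OF g is_orth_proj_in[OF P gC]] .
  have "inner_on X h h = 0" using P gC hV unfolding is_orth_proj_def h_def by blast
  hence "\<And>x. x \<in> X \<Longrightarrow> h x = 0" using inner_on_self_eq_0[OF fin] by blast
  thus ?thesis using gC mat_app_CX[of X P g] unfolding h_def CX_def
    by (intro ext) (case_tac "x \<in> X", auto)
qed

lemma is_orth_proj_annihilates:
  assumes fin: "finite X" and P: "is_orth_proj X V P" and g: "g \<in> CX X" and orth: "\<And>h. h \<in> V \<Longrightarrow> inner_on X g h = 0"
  shows "mat_app X P g = (\<lambda>x. 0)"
proof -
  have PgV: "mat_app X P g \<in> V" using is_orth_proj_in[OF P g] .
  have "inner_on X (mat_app X P g) (mat_app X P g) = inner_on X g (mat_app X P g)"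
    using is_orth_proj_inner[OF P g PgV] .
  also have "\<dots> = 0" using orth[OF PgV] .
  finally have "\<And>x. x \<in> X \<Longrightarrow> mat_app X P g x = 0" using inner_on_self_eq_0[OF fin] by blast
  thus ?thesis by (intro ext) (simp add: mat_app_def)
qed

definition delta_at :: "(real^'m) set \<Rightarrow> real^'m \<Rightarrow> real^'m \<Rightarrow> real" where
  "delta_at X y = zero_ext X (\<lambda>z. if z = y then 1 else 0)"

lemma delta_at_CX: "delta_at X y \<in> CX X" unfolding delta_at_def by (rule zero_ext_CX)

lemma mat_app_delta:
  assumes "finite X" "y \<in> X" shows "mat_app X M (delta_at X y) x = (if x \<in> X then M x y else 0)"
proof -
  have "(\<Sum>z\<in>X. M x z * delta_at X y z) = (\<Sum>z\<in>X. if z = y then M x y else 0)"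
    by (intro sum.cong) (auto simp: delta_at_def zero_ext_def)
  thus ?thesis using assms unfolding mat_app_def by simp
qed

lemma matX_eqI:
  assumes "finite X" "is_matX X M" "is_matX X N"
    and "\<And>f. f \<in> CX X \<Longrightarrow> \<forall>x\<in>X. mat_app X M f x = mat_app X N f x"
  shows "M = N"
proof (intro ext)
  fix x y
  show "M x y = N x y"
  proof (cases "x \<in> X \<and> y \<in> X")
    case True
    thus ?thesis using assms(4)[OF delta_at_CX[of X y]] mat_app_delta[OF assms(1), of y] by force
  next
    case False thus ?thesis using assms(2,3) unfolding is_matX_def by auto
  qed
qed

lemma proj_matrix_eq:
  assumes fin: "finite X" and ne: "X \<noteq> {}" and P: "is_orth_proj X V P" and VC: "V \<subseteq> CX X"
    and Vd: "\<And>f g. f \<in> V \<Longrightarrow> g \<in> V \<Longrightarrow> (\<lambda>x. f x - g x) \<in> V"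
  shows "proj_matrix X V = P"
  unfolding proj_matrix_def
proof (rule the_equality)
  have n0: "real (card X) \<noteq> 0" using fin ne by simp
  have ip: "ipX X f g = inner_on X f g / real (card X)" for f g unfolding ipX_def inner_on_def by simp
  show "is_matX X P \<and> (\<forall>f\<in>CX X. mat_app X P f \<in> V \<and> (\<forall>g\<in>V. ipX X (\<lambda>x. f x - mat_app X P f x) g = 0))"
    using P unfolding is_orth_proj_def ip by simp
  fix M assume M: "is_matX X M \<and> (\<forall>f\<in>CX X. mat_app X M f \<in> V \<and> (\<forall>g\<in>V. ipX X (\<lambda>x. f x - mat_app X M f x) g = 0))"
  show "M = P"
  proof (rule matX_eqI[OF fin])
    show "is_matX X M" using M by blast
    show "is_matX X P" using P unfolding is_orth_proj_def by blast
    fix f assume f: "f \<in> CX X"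
    define h where "h = (\<lambda>x. mat_app X M f x - mat_app X P f x)"
    have MV: "mat_app X M f \<in> V" and Mo: "\<And>g. g \<in> V \<Longrightarrow> inner_on X (\<lambda>x. f x - mat_app X M f x) g = 0"
      using M f n0 unfolding ip by auto
    have PV: "mat_app X P f \<in> V" and Po: "\<And>g. g \<in> V \<Longrightarrow> inner_on X (\<lambda>x. f x - mat_app X P f x) g = 0"
      using P f unfolding is_orth_proj_def by auto
    have hV: "h \<in> V" unfolding h_def by (rule Vd[OF MV PV])
    have "h = (\<lambda>x. (f x - mat_app X P f x) - (f x - mat_app X M f x))" unfolding h_def by auto
    hence "inner_on X h h = 0" using Po[OF hV] Mo[OF hV] by (simp add: inner_on_diff_left)
    thus "\<forall>x\<in>X. mat_app X M f x = mat_app X P f x"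
      using inner_on_self_eq_0[OF fin] unfolding h_def by fastforce
  qed
qed

lemma HarmX_CX: "HarmX X i \<subseteq> CX X"
  unfolding HarmX_def using PolX_CX by auto

lemma ipX_diff_left: "ipX X (\<lambda>x. f x - g x) h = ipX X f h - ipX X g h"
  unfolding ipX_def by (simp add: algebra_simps sum_subtractf diff_divide_distrib)

lemma HarmX_diff: "f \<in> HarmX X i \<Longrightarrow> g \<in> HarmX X i \<Longrightarrow> (\<lambda>x. f x - g x) \<in> HarmX X i"
  unfolding HarmX_def by (auto simp: PolX_diff ipX_diff_left split: if_splits)

lemma prod_inner_eq_sum_PiE:
  fixes u v :: "nat \<Rightarrow> real^'m"
  shows "(\<Prod>l<k. u l \<bullet> v l) = (\<Sum>\<iota>\<in>PiE {..<k} (\<lambda>_. UNIV). (\<Prod>l<k. u l $ \<iota> l) * (\<Prod>l<k. v l $ \<iota> l))"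
proof -
  have "(\<Prod>l<k. u l \<bullet> v l) = (\<Prod>l<k. \<Sum>i\<in>UNIV. u l $ i * v l $ i)"
    by (simp add: inner_vec_def)
  also have "\<dots> = (\<Sum>\<iota>\<in>PiE {..<k} (\<lambda>_. UNIV). \<Prod>l<k. u l $ \<iota> l * v l $ \<iota> l)"
    by (rule prod_sum_PiE) auto
  also have "\<dots> = (\<Sum>\<iota>\<in>PiE {..<k} (\<lambda>_. UNIV). (\<Prod>l<k. u l $ \<iota> l) * (\<Prod>l<k. v l $ \<iota> l))"
    by (simp add: prod.distrib)
  finally show ?thesis .
qed

lemma sum_sq_tensor_power_coords:
  fixes g :: "real^'m \<Rightarrow> real"
  shows "(\<Sum>\<iota>\<in>PiE {..<k} (\<lambda>_. UNIV). (\<Sum>w\<in>X. g w * (\<Prod>l<k. w $ \<iota> l))\<^sup>2)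
       = (\<Sum>c\<in>X. \<Sum>w\<in>X. g c * g w * (c \<bullet> w) ^ k)"
proof -
  define A where "A = (\<lambda>(v::real^'m) \<iota>. \<Prod>l<k. v $ \<iota> l)"
  have pw: "(c \<bullet> w) ^ k = (\<Sum>\<iota>\<in>PiE {..<k} (\<lambda>_. UNIV). A c \<iota> * A w \<iota>)" for c w :: "real^'m"
    using prod_inner_eq_sum_PiE[of "\<lambda>_. c" "\<lambda>_. w" k] unfolding A_def by simp
  have "(\<Sum>\<iota>\<in>PiE {..<k} (\<lambda>_. UNIV). (\<Sum>w\<in>X. g w * A w \<iota>)\<^sup>2)
      = (\<Sum>\<iota>\<in>PiE {..<k} (\<lambda>_. UNIV). \<Sum>c\<in>X. \<Sum>w\<in>X. (g c * A c \<iota>) * (g w * A w \<iota>))"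
    by (simp add: power2_eq_square sum_product)
  also have "\<dots> = (\<Sum>c\<in>X. \<Sum>\<iota>\<in>PiE {..<k} (\<lambda>_. UNIV). \<Sum>w\<in>X. (g c * A c \<iota>) * (g w * A w \<iota>))"
    by (rule sum.swap)
  also have "\<dots> = (\<Sum>c\<in>X. \<Sum>w\<in>X. \<Sum>\<iota>\<in>PiE {..<k} (\<lambda>_. UNIV). (g c * A c \<iota>) * (g w * A w \<iota>))"
    by (intro sum.cong refl sum.swap)
  also have "\<dots> = (\<Sum>c\<in>X. \<Sum>w\<in>X. g c * g w * (c \<bullet> w) ^ k)"
    unfolding pw by (intro sum.cong refl) (simp add: sum_distrib_left algebra_simps)
  finally show ?thesis unfolding A_def .
qed

text \<open>The double sum is the squared norm of the tensor \<open>\<Sum>\<^sub>w g w \<cdot> w\<^sup>\<otimes>\<^sup>k\<close>; if it vanishes,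
  so does every contraction of that tensor with \<open>b\<^sub>0 \<otimes> \<dots> \<otimes> b\<^sub>k\<^sub>-\<^sub>1\<close>.\<close>
lemma sum_prod_inner_eq_0:
  fixes X :: "(real^'m) set" and g :: "real^'m \<Rightarrow> real" and b :: "nat \<Rightarrow> real^'m"
  assumes fin: "finite X" and z: "(\<Sum>c\<in>X. \<Sum>w\<in>X. g c * g w * (c \<bullet> w) ^ k) = 0"
  shows "(\<Sum>w\<in>X. g w * (\<Prod>l<k. b l \<bullet> w)) = 0"
proof -
  define PI where "PI = PiE {..<k} (\<lambda>_. UNIV :: 'm set)"
  define T where "T = (\<lambda>\<iota>. \<Sum>w\<in>X. g w * (\<Prod>l<k. w $ \<iota> l))"
  have "finite PI" unfolding PI_def by (intro finite_PiE) auto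
  moreover have "(\<Sum>\<iota>\<in>PI. (T \<iota>)\<^sup>2) = 0"
    using z unfolding PI_def T_def sum_sq_tensor_power_coords .
  ultimately have T0: "\<forall>\<iota>\<in>PI. T \<iota> = 0"
    using sum_nonneg_eq_0_iff[of PI "\<lambda>\<iota>. (T \<iota>)\<^sup>2"] by auto
  have "(\<Sum>w\<in>X. g w * (\<Prod>l<k. b l \<bullet> w))
      = (\<Sum>w\<in>X. \<Sum>\<iota>\<in>PI. (\<Prod>l<k. b l $ \<iota> l) * (g w * (\<Prod>l<k. w $ \<iota> l)))"
    unfolding prod_inner_eq_sum_PiE[of b "\<lambda>_. w" k for w] PI_def by (simp add: sum_distrib_left algebra_simps)
  also have "\<dots> = (\<Sum>\<iota>\<in>PI. (\<Prod>l<k. b l $ \<iota> l) * T \<iota>)"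
    unfolding T_def by (subst sum.swap) (simp add: sum_distrib_left)
  also have "\<dots> = 0" using T0 by simp
  finally show ?thesis .
qed

lemma sum_mult_inner_power_eq_0:
  fixes X :: "(real^'m) set" and g :: "real^'m \<Rightarrow> real"
  assumes fin: "finite X" and orth: "\<And>c. c \<in> X \<Longrightarrow> (\<Sum>w\<in>X. g w * (c \<bullet> w) ^ Suc i) = 0"
  shows "(\<Sum>w\<in>X. g w * ((y \<bullet> w) * (a \<bullet> w) ^ i)) = 0"
proof -
  have "(\<Sum>c\<in>X. \<Sum>w\<in>X. g c * g w * (c \<bullet> w) ^ Suc i) = 0"
    using orth by (simp add: mult.assoc flip: sum_distrib_left)
  hence "(\<Sum>w\<in>X. g w * (\<Prod>l<Suc i. (\<lambda>l. if l = 0 then y else a) l \<bullet> w)) = 0"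
    by (rule sum_prod_inner_eq_0[OF fin])
  moreover have "(\<Prod>l<Suc i. (\<lambda>l. if l = 0 then y else a) l \<bullet> w) = (y \<bullet> w) * (a \<bullet> w) ^ i" for w
    by (simp only: prod.lessThan_Suc_shift) simp
  ultimately show ?thesis by simp
qed

lemma sum_atMost_split: "j \<le> n \<Longrightarrow> (\<Sum>i\<le>n. f i) = (\<Sum>i\<le>j. f i) + (\<Sum>i\<in>{Suc j..n}. f i)"
proof -
  assume j: "j \<le> n"
  have "{..n} = {..j} \<union> {Suc j..n}" using j by auto
  moreover have "{..j} \<inter> {Suc j..n} = {}" by auto
  ultimately show ?thesis by (simp add: sum.union_disjoint)
qed

locale finite_points =
  fixes X :: "(real^'m) set"
  assumes fin: "finite X" and ne: "X \<noteq> {}"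
begin

abbreviation "n \<equiv> real (card X)"

lemma n_pos: "n > 0" using fin ne by (simp add: card_gt_0_iff)

definition proj_pol :: "nat \<Rightarrow> real^'m \<Rightarrow> real^'m \<Rightarrow> real" where
  "proj_pol k = (SOME P. is_orth_proj X (PolX X k) P)"

lemma is_orth_proj_proj_pol: "is_orth_proj X (PolX X k) (proj_pol k)"
proof -
  have "\<exists>P. is_orth_proj X (PolX X k) P"
    unfolding PolX_span by (rule orth_proj_exists[OF fin]) (simp add: fin)
  thus ?thesis unfolding proj_pol_def by (rule someI_ex)
qed

lemma is_matX_proj_pol: "is_matX X (proj_pol k)" and proj_pol_sym: "proj_pol k x y = proj_pol k y x"
  using is_orth_proj_proj_pol[of k] unfolding is_orth_proj_def by auto

lemma proj_pol_in_PolX: "f \<in> CX X \<Longrightarrow> mat_app X (proj_pol k) f \<in> PolX X k"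
  using is_orth_proj_proj_pol[of k] unfolding is_orth_proj_def by blast

lemma proj_pol_orth: "f \<in> CX X \<Longrightarrow> g \<in> PolX X k \<Longrightarrow> inner_on X (\<lambda>x. f x - mat_app X (proj_pol k) f x) g = 0"
  using is_orth_proj_proj_pol[of k] unfolding is_orth_proj_def by blast

lemma proj_pol_fixes: "g \<in> PolX X k \<Longrightarrow> mat_app X (proj_pol k) g = g"
  by (rule is_orth_proj_fixes[OF fin is_orth_proj_proj_pol PolX_CX PolX_diff])

lemma proj_pol_annihilates: "g \<in> CX X \<Longrightarrow> (\<And>h. h \<in> PolX X k \<Longrightarrow> inner_on X g h = 0) \<Longrightarrow> mat_app X (proj_pol k) g = (\<lambda>x. 0)"
  by (rule is_orth_proj_annihilates[OF fin is_orth_proj_proj_pol])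

lemma proj_pol_inner: "f \<in> CX X \<Longrightarrow> g \<in> PolX X k \<Longrightarrow> inner_on X (mat_app X (proj_pol k) f) g = inner_on X f g"
  by (rule is_orth_proj_inner[OF is_orth_proj_proj_pol])

lemma proj_pol_unique: "is_orth_proj X (PolX X k) P \<Longrightarrow> P = proj_pol k"
  using proj_matrix_eq[OF fin ne _ PolX_CX PolX_diff, of k] is_orth_proj_proj_pol[of k] by metis

definition proj_harm :: "nat \<Rightarrow> real^'m \<Rightarrow> real^'m \<Rightarrow> real" where
  "proj_harm i = (if i = 0 then proj_pol 0 else (\<lambda>x y. proj_pol i x y - proj_pol (i - 1) x y))"

lemma proj_harm_app: "mat_app X (proj_harm i) f = (if i = 0 then mat_app X (proj_pol 0) f
    else (\<lambda>x. mat_app X (proj_pol i) f x - mat_app X (proj_pol (i - 1)) f x))"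
  unfolding proj_harm_def by (simp add: mat_app_mdiff)

lemma is_matX_proj_harm: "is_matX X (proj_harm i)"
  using is_matX_proj_pol unfolding proj_harm_def is_matX_def by auto

lemma proj_harm_sym: "proj_harm i x y = proj_harm i y x"
  unfolding proj_harm_def using proj_pol_sym by auto

lemma ipX_eq_inner_on: "ipX X f g = inner_on X f g / n" unfolding ipX_def inner_on_def by simp

lemma is_orth_proj_proj_harm: "is_orth_proj X (HarmX X i) (proj_harm i)"
proof (cases "i = 0")
  case True thus ?thesis using is_orth_proj_proj_pol[of 0] by (simp add: proj_harm_def HarmX_def)
next
  case False
  have mono: "PolX X (i - 1) \<subseteq> PolX X i" by (rule PolX_mono) simp
  show ?thesis unfolding is_orth_proj_def
  proof (intro conjI allI ballI)
    show "is_matX X (proj_harm i)" by (rule is_matX_proj_harm)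
    show "\<And>x y. proj_harm i x y = proj_harm i y x" by (rule proj_harm_sym)
    fix f assume f: "f \<in> CX X"
    have app: "mat_app X (proj_harm i) f = (\<lambda>x. mat_app X (proj_pol i) f x - mat_app X (proj_pol (i - 1)) f x)"
      using False by (simp add: proj_harm_app)
    have inP: "mat_app X (proj_harm i) f \<in> PolX X i"
      unfolding app using proj_pol_in_PolX[OF f, of i] proj_pol_in_PolX[OF f, of "i-1"] mono by (intro PolX_diff) auto
    have orth: "ipX X (mat_app X (proj_harm i) f) g = 0" if g: "g \<in> PolX X (i - 1)" for g
      using proj_pol_inner[OF f g] proj_pol_inner[OF f, of g i] g mono
      unfolding app ipX_eq_inner_on by (auto simp: inner_on_diff_left)
    show "mat_app X (proj_harm i) f \<in> HarmX X i"
      using inP orth False unfolding HarmX_def by auto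
    fix h assume h: "h \<in> HarmX X i"
    have hP: "h \<in> PolX X i" and ho: "\<And>g. g \<in> PolX X (i-1) \<Longrightarrow> inner_on X h g = 0"
      using h False n_pos unfolding HarmX_def ipX_eq_inner_on by auto
    have "inner_on X (\<lambda>x. f x - mat_app X (proj_harm i) f x) h
        = inner_on X (\<lambda>x. f x - mat_app X (proj_pol i) f x) h + inner_on X (mat_app X (proj_pol (i - 1)) f) h"
      unfolding app by (simp add: inner_on_def algebra_simps sum.distrib sum_subtractf)
    also have "\<dots> = 0" using proj_pol_orth[OF f hP] ho[OF proj_pol_in_PolX[OF f]] by (simp add: inner_on_commute)
    finally show "inner_on X (\<lambda>x. f x - mat_app X (proj_harm i) f x) h = 0" .
  qed
qed

lemma projF_eq: "projF X i = proj_harm i"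
  unfolding projF_def by (rule proj_matrix_eq[OF fin ne is_orth_proj_proj_harm HarmX_CX HarmX_diff])

lemma proj_harm_annihilates_lower: "0 < i \<Longrightarrow> g \<in> PolX X (i - 1) \<Longrightarrow> mat_app X (proj_harm i) g = (\<lambda>x. 0)"
proof -
  assume i: "0 < i" and g: "g \<in> PolX X (i - 1)"
  have "g \<in> PolX X i" using g PolX_mono[of "i-1" i X] by auto
  hence "mat_app X (proj_pol i) g = g" by (rule proj_pol_fixes)
  moreover have "mat_app X (proj_pol (i-1)) g = g" using g by (rule proj_pol_fixes)
  ultimately show ?thesis using i by (simp add: proj_harm_app)
qed

lemma proj_harm_annihilates_orth: "g \<in> CX X \<Longrightarrow> (\<And>h. h \<in> PolX X i \<Longrightarrow> inner_on X g h = 0) \<Longrightarrow> mat_app X (proj_harm i) g = (\<lambda>x. 0)"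
proof -
  assume g: "g \<in> CX X" and o: "\<And>h. h \<in> PolX X i \<Longrightarrow> inner_on X g h = 0"
  have "mat_app X (proj_pol i) g = (\<lambda>x. 0)" by (rule proj_pol_annihilates[OF g o])
  moreover have "mat_app X (proj_pol (i-1)) g = (\<lambda>x. 0)"
    using o PolX_mono[of "i-1" i X] by (intro proj_pol_annihilates[OF g]) auto
  ultimately show ?thesis by (cases "i = 0") (auto simp add: proj_harm_app)
qed

lemma proj_harm_fixes: "h \<in> PolX X i \<Longrightarrow> (\<And>g. 0 < i \<Longrightarrow> g \<in> PolX X (i - 1) \<Longrightarrow> inner_on X h g = 0) \<Longrightarrow> mat_app X (proj_harm i) h = h"
proof -
  assume h: "h \<in> PolX X i" and o: "\<And>g. 0 < i \<Longrightarrow> g \<in> PolX X (i - 1) \<Longrightarrow> inner_on X h g = 0"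
  have hC: "h \<in> CX X" using h PolX_CX by blast
  show ?thesis
  proof (cases "i = 0")
    case True thus ?thesis using proj_pol_fixes[OF h] by (simp add: proj_harm_app)
  next
    case False
    have "mat_app X (proj_pol (i-1)) h = (\<lambda>x. 0)" using o False by (intro proj_pol_annihilates[OF hC]) auto
    thus ?thesis using proj_pol_fixes[OF h] False by (simp add: proj_harm_app)
  qed
qed

lemma proj_harm_proj_pol: assumes f: "f \<in> CX X" shows "mat_app X (proj_harm j) (mat_app X (proj_pol j) f) = mat_app X (proj_harm j) f"
proof (cases "j = 0")
  case True thus ?thesis using proj_pol_fixes[OF proj_pol_in_PolX[OF f]] by (simp add: proj_harm_app)
next
  case False
  define r where "r = (\<lambda>x. f x - mat_app X (proj_pol j) f x)"
  have rC: "r \<in> CX X" using f mat_app_CX[of X "proj_pol j" f] unfolding r_def CX_def by auto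
  have "mat_app X (proj_pol (j - 1)) r = (\<lambda>x. 0)"
  proof (rule proj_pol_annihilates[OF rC])
    fix h assume "h \<in> PolX X (j - 1)"
    hence "h \<in> PolX X j" using PolX_mono[of "j - 1" j X] by auto
    thus "inner_on X r h = 0" unfolding r_def by (rule proj_pol_orth[OF f])
  qed
  hence "mat_app X (proj_pol (j - 1)) f = mat_app X (proj_pol (j - 1)) (mat_app X (proj_pol j) f)"
    unfolding r_def mat_app_diff by (auto simp: fun_eq_iff)
  thus ?thesis using False proj_pol_fixes[OF proj_pol_in_PolX[OF f]] by (simp add: proj_harm_app)
qed

lemma proj_harm_HarmX:
  assumes h: "h \<in> HarmX X k"
  shows "mat_app X (proj_harm i) h = (if i = k then h else (\<lambda>x. 0))"
proof -
  have hP: "h \<in> PolX X k" using h unfolding HarmX_def by (auto split: if_splits)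
  have hO: "\<And>g. 0 < k \<Longrightarrow> g \<in> PolX X (k - 1) \<Longrightarrow> inner_on X h g = 0"
    using h n_pos unfolding HarmX_def ipX_eq_inner_on by auto
  consider "i = k" | "i < k" | "k < i" by linarith
  thus ?thesis
  proof cases
    case 1 thus ?thesis using proj_harm_fixes[OF hP hO] by simp
  next
    case 2
    have "mat_app X (proj_harm i) h = (\<lambda>x. 0)"
    proof (rule proj_harm_annihilates_orth)
      show "h \<in> CX X" using h HarmX_CX by blast
      fix g assume "g \<in> PolX X i"
      moreover have "i \<le> k - 1" using 2 by simp
      ultimately have "g \<in> PolX X (k - 1)" using PolX_mono by blast
      thus "inner_on X h g = 0" using hO 2 by simp
    qed
    thus ?thesis using 2 by simp
  next
    case 3
    hence "k \<le> i - 1" by simp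
    hence "h \<in> PolX X (i - 1)" using hP PolX_mono by blast
    thus ?thesis using proj_harm_annihilates_lower[of i h] 3 by simp
  qed
qed

lemma mat_mult_proj_harm: "mat_mult X (proj_harm i) (proj_harm k) x y = (if i = k then proj_harm i x y else 0)"
proof (cases "x \<in> X \<and> y \<in> X")
  case False
  hence "mat_mult X (proj_harm i) (proj_harm k) x y = 0"
    using is_matX_proj_harm[of i] is_matX_proj_harm[of k] unfolding mat_mult_def is_matX_def by (auto intro!: sum.neutral)
  moreover have "proj_harm i x y = 0" using False is_matX_proj_harm[of i] unfolding is_matX_def by auto
  ultimately show ?thesis by (cases "i = k") simp_all
next
  case True
  hence x: "x \<in> X" and y: "y \<in> X" by auto
  define col where "col = mat_app X (proj_harm k) (delta_at X y)"
  have colv: "z \<in> X \<Longrightarrow> col z = proj_harm k z y" for z unfolding col_def using mat_app_delta[OF fin y] by simp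
  have "col \<in> HarmX X k"
    unfolding col_def using is_orth_proj_proj_harm[of k] delta_at_CX unfolding is_orth_proj_def by blast
  moreover have "mat_mult X (proj_harm i) (proj_harm k) x y = mat_app X (proj_harm i) col x"
    unfolding mat_mult_def mat_app_def using x colv by (auto intro!: sum.cong)
  ultimately show ?thesis using x colv proj_harm_HarmX by simp
qed

lemma sum_proj_pol_sq: "y \<in> X \<Longrightarrow> (\<Sum>z\<in>X. proj_pol k y z * proj_pol k y z) = proj_pol k y y"
proof -
  assume y: "y \<in> X"
  define c where "c = mat_app X (proj_pol k) (delta_at X y)"
  have "mat_app X (proj_pol k) c = c" unfolding c_def by (rule proj_pol_fixes[OF proj_pol_in_PolX[OF delta_at_CX]])
  hence "mat_app X (proj_pol k) c y = c y" by simp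
  moreover have "mat_app X (proj_pol k) c y = (\<Sum>z\<in>X. proj_pol k y z * proj_pol k z y)"
  proof -
    have "mat_app X (proj_pol k) c y = (\<Sum>z\<in>X. proj_pol k y z * c z)" using y unfolding mat_app_def by simp
    also have "\<dots> = (\<Sum>z\<in>X. proj_pol k y z * proj_pol k z y)"
      using mat_app_delta[OF fin y] by (intro sum.cong) (simp_all add: c_def)
    finally show ?thesis .
  qed
  ultimately have "(\<Sum>z\<in>X. proj_pol k y z * proj_pol k z y) = proj_pol k y y" using y mat_app_delta[OF fin y] unfolding c_def by simp
  moreover have "(\<Sum>z\<in>X. proj_pol k y z * proj_pol k z y) = (\<Sum>z\<in>X. proj_pol k y z * proj_pol k y z)"
  proof (intro sum.cong refl)
    fix z show "proj_pol k y z * proj_pol k z y = proj_pol k y z * proj_pol k y z" using proj_pol_sym[of k z y] by simp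
  qed
  ultimately show ?thesis by simp
qed

lemma proj_pol_eq_sum_proj_harm: "proj_pol k x y = (\<Sum>i\<le>k. proj_harm i x y)"
  by (induction k) (auto simp: proj_harm_def)

lemma zeta_power_in_PolX: "c \<in> X \<Longrightarrow> i \<le> k \<Longrightarrow> zero_ext X (\<lambda>w. (c \<bullet> w) ^ i) \<in> PolX X k"
  using PolX_zeta[OF fin, of c "monom 1 i" k] by (simp add: poly_monom degree_monom_eq)

lemma inner_on_mult_inner_eq_0:
  assumes r: "\<And>g. g \<in> PolX X (Suc j) \<Longrightarrow> inner_on X r g = 0" and y: "y \<in> X" and f: "f \<in> PolX X j"
  shows "inner_on X r (zero_ext X (\<lambda>w. (y \<bullet> w) * f w)) = 0"
proof -
  obtain p where p: "\<And>a. degree (p a) \<le> j"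
      "\<And>x. f x = (if x \<in> X then (\<Sum>a\<in>X. poly (p a) (a \<bullet> x)) else 0)"
    using f unfolding PolX_def by blast
  have term_eq_0: "(\<Sum>w\<in>X. r w * ((y \<bullet> w) * (a \<bullet> w) ^ i)) = 0" if "i \<le> j" for a i
  proof (rule sum_mult_inner_power_eq_0[OF fin])
    fix c assume "c \<in> X"
    hence "zero_ext X (\<lambda>w. (c \<bullet> w) ^ Suc i) \<in> PolX X (Suc j)"
      using that by (intro zeta_power_in_PolX) auto
    hence "inner_on X r (zero_ext X (\<lambda>w. (c \<bullet> w) ^ Suc i)) = 0" by (rule r)
    thus "(\<Sum>w\<in>X. r w * (c \<bullet> w) ^ Suc i) = 0" unfolding inner_on_def zero_ext_def by simp
  qed
  have "inner_on X r (zero_ext X (\<lambda>w. (y \<bullet> w) * f w))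
      = (\<Sum>w\<in>X. \<Sum>a\<in>X. \<Sum>i\<le>j. coeff (p a) i * (r w * ((y \<bullet> w) * (a \<bullet> w) ^ i)))"
    unfolding inner_on_def zero_ext_def using p(2) poly_eq_sum_upto[OF p(1)]
    by (intro sum.cong) (auto simp: sum_distrib_left algebra_simps)
  also have "\<dots> = (\<Sum>a\<in>X. \<Sum>w\<in>X. \<Sum>i\<le>j. coeff (p a) i * (r w * ((y \<bullet> w) * (a \<bullet> w) ^ i)))"
    by (rule sum.swap)
  also have "\<dots> = (\<Sum>a\<in>X. \<Sum>i\<le>j. coeff (p a) i * (\<Sum>w\<in>X. r w * ((y \<bullet> w) * (a \<bullet> w) ^ i)))"
    by (intro sum.cong refl) (simp add: sum_distrib_left sum.swap[of _ X])
  also have "\<dots> = 0" using term_eq_0 by simp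
  finally show ?thesis .
qed

lemma PolX_mult_inner:
  assumes y: "y \<in> X" and f: "f \<in> PolX X j"
  shows "zero_ext X (\<lambda>w. (y \<bullet> w) * f w) \<in> PolX X (Suc j)"
proof -
  define h where "h = zero_ext X (\<lambda>w. (y \<bullet> w) * f w)"
  define r where "r = (\<lambda>x. h x - mat_app X (proj_pol (Suc j)) h x)"
  have hC: "h \<in> CX X" unfolding h_def by (rule zero_ext_CX)
  have r_orth: "inner_on X r g = 0" if "g \<in> PolX X (Suc j)" for g
    unfolding r_def using proj_pol_orth[OF hC that] .
  have "inner_on X r r = inner_on X r h - inner_on X r (mat_app X (proj_pol (Suc j)) h)"
    unfolding r_def by (rule inner_on_diff_right)
  also have "\<dots> = 0"
    using inner_on_mult_inner_eq_0[OF r_orth y f] r_orth[OF proj_pol_in_PolX[OF hC]] unfolding h_def by simp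
  finally have "r x = 0" if "x \<in> X" for x using inner_on_self_eq_0[OF fin _ that] by blast
  hence "h = mat_app X (proj_pol (Suc j)) h"
    using hC mat_app_CX[of X "proj_pol (Suc j)" h] unfolding r_def CX_def
    by (intro ext) (case_tac "x \<in> X", auto)
  thus ?thesis using proj_pol_in_PolX[OF hC] unfolding h_def by metis
qed

lemma const_in_PolX0: "zero_ext X (\<lambda>_. C) \<in> PolX X 0"
proof -
  obtain a where a: "a \<in> X" using ne by blast
  show ?thesis using PolX_zeta[OF fin a, of "[:C:]" 0] by simp
qed

lemma PolX0_const: "g \<in> PolX X 0 \<Longrightarrow> \<exists>C. \<forall>x\<in>X. g x = C"
proof -
  assume "g \<in> PolX X 0"
  then obtain p where p: "\<And>a. degree (p a) \<le> 0"
      "\<And>x. g x = (if x \<in> X then (\<Sum>a\<in>X. poly (p a) (a \<bullet> x)) else 0)"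
    unfolding PolX_def by blast
  have "\<forall>x\<in>X. g x = (\<Sum>a\<in>X. coeff (p a) 0)"
    using p poly_eq_sum_upto[OF p(1)] by simp
  thus ?thesis by blast
qed

lemma PolX1_affine: "g \<in> PolX X 1 \<Longrightarrow> \<exists>c0 c1. \<forall>x\<in>X. g x = (\<Sum>a\<in>X. c0 a + c1 a * (a \<bullet> x))"
proof -
  assume "g \<in> PolX X 1"
  then obtain p where p: "\<And>a. degree (p a) \<le> 1"
      "\<And>x. g x = (if x \<in> X then (\<Sum>a\<in>X. poly (p a) (a \<bullet> x)) else 0)"
    unfolding PolX_def by blast
  have "\<forall>x\<in>X. g x = (\<Sum>a\<in>X. coeff (p a) 0 + coeff (p a) 1 * (a \<bullet> x))"
    using p poly_eq_sum_upto[OF p(1)] by simp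
  thus ?thesis by (rule_tac x="\<lambda>a. coeff (p a) 0" in exI, rule_tac x="\<lambda>a. coeff (p a) 1" in exI) simp
qed

lemma proj_pol_0: assumes xy: "x \<in> X" "y \<in> X" shows "proj_pol 0 x y = 1 / n"
proof -
  define J where "J = (\<lambda>x y. if x \<in> X \<and> y \<in> X then 1 / n else 0)"
  have appJ: "mat_app X J f = zero_ext X (\<lambda>_. (\<Sum>y\<in>X. f y) / n)" for f
    unfolding mat_app_def J_def zero_ext_def by (auto simp: sum_divide_distrib)
  have "is_orth_proj X (PolX X 0) J"
    unfolding is_orth_proj_def
  proof (intro conjI allI ballI)
    show "is_matX X J" unfolding is_matX_def J_def by auto
    show "\<And>x y. J x y = J y x" unfolding J_def by auto
    fix f assume f: "f \<in> CX X"
    show "mat_app X J f \<in> PolX X 0" unfolding appJ by (rule const_in_PolX0)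
    fix g assume "g \<in> PolX X 0"
    then obtain C where C: "\<forall>x\<in>X. g x = C" using PolX0_const by blast
    have "inner_on X (\<lambda>x. f x - mat_app X J f x) g = (\<Sum>x\<in>X. (f x - (\<Sum>y\<in>X. f y) / n) * C)"
      unfolding inner_on_def appJ zero_ext_def using C by (intro sum.cong) auto
    also have "\<dots> = C * (\<Sum>x\<in>X. f x) - C * (n * ((\<Sum>y\<in>X. f y) / n))"
      by (simp only: left_diff_distrib sum_subtractf sum_constant) (simp add: sum_distrib_left[symmetric] sum_distrib_right algebra_simps)
    also have "\<dots> = 0" using n_pos by simp
    finally show "inner_on X (\<lambda>x. f x - mat_app X J f x) g = 0" .
  qed
  hence JP: "J = proj_pol 0" by (rule proj_pol_unique)
  show ?thesis using xy unfolding JP[symmetric] J_def by simp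
qed

end

locale sphere_points = finite_points X for X :: "(real^'m::finite) set" +
  assumes sph: "\<forall>x\<in>X. x \<bullet> x = real CARD('m)"
begin

lemma inner_self: "x \<in> X \<Longrightarrow> x \<bullet> x = real CARD('m)" using sph by blast

lemma inner_less_m:
  assumes "x \<in> X" "y \<in> X" "x \<noteq> y" shows "x \<bullet> y < real CARD('m)"
proof -
  have "0 < (x - y) \<bullet> (x - y)" using assms(3) by simp
  also have "(x - y) \<bullet> (x - y) = x \<bullet> x + y \<bullet> y - 2 * (x \<bullet> y)"
    by (simp add: inner_diff_left inner_diff_right inner_commute)
  finally show ?thesis using inner_self assms(1,2) by simp
qed

lemma inner_eq_m_iff: "x \<in> X \<Longrightarrow> y \<in> X \<Longrightarrow> x \<bullet> y = real CARD('m) \<longleftrightarrow> x = y"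
  using inner_less_m inner_self by force

lemma finite_inner_set: "finite (inner_set X)"
proof -
  have "inner_set X \<subseteq> (\<lambda>(x,y). x \<bullet> y) ` (X \<times> X)" unfolding inner_set_def by auto
  thus ?thesis using fin by (auto intro: finite_subset)
qed

lemma m_notin_inner_set: "real CARD('m) \<notin> inner_set X"
  unfolding inner_set_def using inner_less_m by fastforce

lemma inner_in_inner_set': "x \<in> X \<Longrightarrow> y \<in> X \<Longrightarrow> x \<bullet> y \<in> inner_set' X"
  unfolding inner_set'_def inner_set_def using inner_self by (cases "x = y") auto

lemma finite_inner_set': "finite (inner_set' X)" unfolding inner_set'_def using finite_inner_set by simp

lemma card_inner_set': "card (inner_set' X) = Suc (card (inner_set X))"
  unfolding inner_set'_def using finite_inner_set m_notin_inner_set by simp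

definition indicator_poly :: "real poly" where
  "indicator_poly = smult (1 / (\<Prod>\<alpha>\<in>inner_set X. (real CARD('m) - \<alpha>))) (\<Prod>\<alpha>\<in>inner_set X. [:-\<alpha>, 1:])"

lemma degree_indicator_poly: "degree indicator_poly \<le> card (inner_set X)"
proof -
  have "degree (\<Prod>\<alpha>\<in>inner_set X. [:-\<alpha>, 1:]) \<le> (\<Sum>\<alpha>\<in>inner_set X. degree [:-\<alpha>, 1:])"
    using degree_prod_sum_le[OF finite_inner_set, of "\<lambda>\<alpha>. [:-\<alpha>, 1:]"] by (simp add: o_def)
  also have "\<dots> = card (inner_set X)" by simp
  finally show ?thesis unfolding indicator_poly_def by simp
qed

lemma poly_indicator_poly: "x \<in> X \<Longrightarrow> y \<in> X \<Longrightarrow> poly indicator_poly (x \<bullet> y) = (if x = y then 1 else 0)"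
proof -
  assume x: "x \<in> X" and y: "y \<in> X"
  have nz: "(\<Prod>\<alpha>\<in>inner_set X. (real CARD('m) - \<alpha>)) \<noteq> 0"
    using m_notin_inner_set finite_inner_set by (auto simp: prod_zero_iff)
  show ?thesis
  proof (cases "x = y")
    case True thus ?thesis using inner_self[OF x] nz by (simp add: indicator_poly_def poly_prod)
  next
    case False
    hence "x \<bullet> y \<in> inner_set X" using x y unfolding inner_set_def by blast
    thus ?thesis using False finite_inner_set by (simp add: indicator_poly_def poly_prod prod_zero_iff)
  qed
qed

lemma PolX_eq_CX: "PolX X (card (inner_set X)) = CX X"
proof
  show "PolX X (card (inner_set X)) \<subseteq> CX X" by (rule PolX_CX)
  show "CX X \<subseteq> PolX X (card (inner_set X))"
  proof
    fix f assume f: "f \<in> CX X"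
    define p where "p = (\<lambda>a. smult (f a) indicator_poly)"
    have "f x = (if x \<in> X then (\<Sum>a\<in>X. poly (p a) (a \<bullet> x)) else 0)" for x
    proof (cases "x \<in> X")
      case True
      have "(\<Sum>a\<in>X. poly (p a) (a \<bullet> x)) = (\<Sum>a\<in>X. if a = x then f x else 0)"
        using True by (intro sum.cong) (auto simp: p_def poly_indicator_poly)
      thus ?thesis using True fin by simp
    next
      case False thus ?thesis using f unfolding CX_def by auto
    qed
    moreover have "degree (p a) \<le> card (inner_set X)" for a
      using degree_indicator_poly unfolding p_def by (simp add: order.trans[OF degree_smult_le])
    ultimately show "f \<in> PolX X (card (inner_set X))" unfolding PolX_def by blast
  qed
qed

lemma proj_pol_top: "x \<in> X \<Longrightarrow> y \<in> X \<Longrightarrow> proj_pol (card (inner_set X)) x y = (if x = y then 1 else 0)"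
proof -
  assume x: "x \<in> X" and y: "y \<in> X"
  have "mat_app X (proj_pol (card (inner_set X))) (delta_at X y) = delta_at X y"
    using PolX_eq_CX delta_at_CX by (intro proj_pol_fixes) auto
  hence "mat_app X (proj_pol (card (inner_set X))) (delta_at X y) x = delta_at X y x" by simp
  thus ?thesis using mat_app_delta[OF fin y] x by (simp add: delta_at_def zero_ext_def)
qed

definition pred_inner :: "(real \<Rightarrow> real) \<Rightarrow> (real \<Rightarrow> real) \<Rightarrow> real" where
  "pred_inner \<phi> \<psi> = (\<Sum>x\<in>X. \<Sum>y\<in>X. \<phi> (x \<bullet> y) * \<psi> (x \<bullet> y)) / n\<^sup>2"

lemma pred_ip_eq_pred_inner: "pred_ip X p r = pred_inner (poly p) (poly r)"
proof -
  define f where "f = (\<lambda>\<alpha>. poly p \<alpha> * poly r \<alpha>)"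
  define g where "g = (\<lambda>z::(real^'m) \<times> (real^'m). fst z \<bullet> snd z)"
  have fin2: "finite (X \<times> X)" using fin by simp
  have img: "g ` (X \<times> X) \<subseteq> inner_set' X" unfolding g_def using inner_in_inner_set' by auto
  have "(\<Sum>x\<in>X. \<Sum>y\<in>X. f (x \<bullet> y)) = (\<Sum>z\<in>X \<times> X. f (g z))"
    unfolding g_def by (simp add: sum.cartesian_product split_def)
  also have "\<dots> = (\<Sum>\<alpha>\<in>inner_set' X. \<Sum>z\<in>{z \<in> X \<times> X. g z = \<alpha>}. f (g z))"
    by (rule sum.group[OF fin2 finite_inner_set' img, symmetric])
  also have "\<dots> = (\<Sum>\<alpha>\<in>inner_set' X. real (kappa X \<alpha>) * f \<alpha>)"
  proof (intro sum.cong refl)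
    fix \<alpha> assume "\<alpha> \<in> inner_set' X"
    have S: "{z \<in> X \<times> X. g z = \<alpha>} = {(x, y). x \<in> X \<and> y \<in> X \<and> x \<bullet> y = \<alpha>}"
      unfolding g_def by auto
    have "(\<Sum>z\<in>{z \<in> X \<times> X. g z = \<alpha>}. f (g z)) = (\<Sum>z\<in>{z \<in> X \<times> X. g z = \<alpha>}. f \<alpha>)"
      by (intro sum.cong) auto
    thus "(\<Sum>z\<in>{z \<in> X \<times> X. g z = \<alpha>}. f (g z)) = real (kappa X \<alpha>) * f \<alpha>"
      unfolding kappa_def S[symmetric] by simp
  qed
  finally show ?thesis unfolding pred_ip_def pred_inner_def f_def by (simp add: mult.assoc)
qed

lemma pred_inner_commute: "pred_inner \<phi> \<psi> = pred_inner \<psi> \<phi>" unfolding pred_inner_def by (simp add: mult.commute)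

lemma pred_inner_cong: "(\<And>\<alpha>. \<alpha> \<in> inner_set' X \<Longrightarrow> \<phi> \<alpha> = \<phi>' \<alpha>) \<Longrightarrow> pred_inner \<phi> \<psi> = pred_inner \<phi>' \<psi>"
  unfolding pred_inner_def using inner_in_inner_set' by (auto intro!: sum.cong arg_cong2[where f="(/)"])

lemma pred_inner_sum_left: "finite I \<Longrightarrow> pred_inner (\<lambda>t. \<Sum>i\<in>I. d i * f i t) \<psi> = (\<Sum>i\<in>I. d i * pred_inner (f i) \<psi>)"
  unfolding pred_inner_def
  by (simp add: sum_distrib_right sum_distrib_left sum_divide_distrib algebra_simps sum.swap[of _ I])

lemma pred_inner_self_nonneg: "pred_inner \<phi> \<phi> \<ge> 0"
  unfolding pred_inner_def by (auto intro!: divide_nonneg_nonneg sum_nonneg)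

lemma pred_inner_self_eq_0:
  assumes z: "pred_inner \<phi> \<phi> = 0" and a: "\<alpha> \<in> inner_set' X"
  shows "\<phi> \<alpha> = 0"
proof -
  obtain x y where xy: "x \<in> X" "y \<in> X" "x \<bullet> y = \<alpha>"
    using a ne inner_self unfolding inner_set'_def inner_set_def by auto
  have "(\<Sum>x\<in>X. \<Sum>y\<in>X. \<phi> (x \<bullet> y) * \<phi> (x \<bullet> y)) = 0" using z n_pos unfolding pred_inner_def by simp
  hence "(\<Sum>y\<in>X. \<phi> (x \<bullet> y) * \<phi> (x \<bullet> y)) = 0"
    using sum_nonneg_eq_0_iff[OF fin, of "\<lambda>x. \<Sum>y\<in>X. \<phi> (x \<bullet> y) * \<phi> (x \<bullet> y)"] xy(1)
    by (simp add: sum_nonneg)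
  hence "\<phi> (x \<bullet> y) * \<phi> (x \<bullet> y) = 0"
    using sum_nonneg_eq_0_iff[OF fin, of "\<lambda>y. \<phi> (x \<bullet> y) * \<phi> (x \<bullet> y)"] xy(2) by simp
  thus ?thesis using xy by simp
qed

lemma pred_inner_shift: "pred_inner (\<lambda>t. t * poly p t) (poly r) = pred_inner (poly p) (poly (pCons 0 r))"
  unfolding pred_inner_def by (simp add: algebra_simps)

lemma pred_inner_pCons: "pred_inner (\<lambda>t. t * poly p t) \<psi> = pred_inner (poly (pCons 0 p)) \<psi>"
  unfolding pred_inner_def by simp

lemma sum_adjX: "(\<Sum>\<alpha>\<in>inner_set' X. c \<alpha> * adjX X \<alpha> x y) = (if x \<in> X \<and> y \<in> X then c (x \<bullet> y) else 0)"
proof (cases "x \<in> X \<and> y \<in> X")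
  case True
  have "(\<Sum>\<alpha>\<in>inner_set' X. c \<alpha> * adjX X \<alpha> x y) = (\<Sum>\<alpha>\<in>inner_set' X. if \<alpha> = x \<bullet> y then c (x \<bullet> y) else 0)"
    using True by (intro sum.cong refl) (auto simp: adjX_def)
  thus ?thesis using True inner_in_inner_set' finite_inner_set' by simp
next
  case False
  hence "\<And>\<alpha>. adjX X \<alpha> x y = 0" by (auto simp: adjX_def)
  thus ?thesis using False by auto
qed

lemma bose_mesner_iff: "M \<in> bose_mesner X \<longleftrightarrow> (\<exists>\<phi>. \<forall>x y. M x y = (if x \<in> X \<and> y \<in> X then \<phi> (x \<bullet> y) else 0))"
  unfolding bose_mesner_def sum_adjX by blast

lemma adjX_in_bose_mesner: "adjX X \<gamma> \<in> bose_mesner X"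
  unfolding bose_mesner_iff by (rule exI[of _ "\<lambda>t. if t = \<gamma> then 1 else 0"]) (auto simp: adjX_def)

lemma sym_assoc_schemeI:
  assumes "\<And>\<alpha> \<beta>. mat_mult X (adjX X \<alpha>) (adjX X \<beta>) \<in> bose_mesner X"
  shows "sym_assoc_scheme X"
  unfolding sym_assoc_scheme_def
proof (intro conjI ballI allI)
  fix x y
  show "adjX X (real CARD('m)) x y = (if x \<in> X \<and> y \<in> X \<and> x = y then 1 else 0)"
    unfolding adjX_def using inner_eq_m_iff by auto
next
  fix \<alpha> assume "\<alpha> \<in> inner_set' X"
  thus "\<exists>x\<in>X. \<exists>y\<in>X. x \<bullet> y = \<alpha>"
    using ne inner_self unfolding inner_set'_def inner_set_def by auto
next
  fix x y assume "x \<in> X" "y \<in> X"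
  thus "\<exists>!\<alpha>. \<alpha> \<in> inner_set' X \<and> x \<bullet> y = \<alpha>" using inner_in_inner_set' by auto
next
  fix \<alpha> x y show "adjX X \<alpha> x y = adjX X \<alpha> y x" unfolding adjX_def by (auto simp: inner_commute)
qed (use assms in blast)

end

locale sph_2_design = sphere_points X for X :: "(real^'m::finite) set" +
  assumes des: "spherical_2_design X"
begin

lemma sum_inner_eq_0: "x \<in> X \<Longrightarrow> (\<Sum>y\<in>X. x \<bullet> y) = 0"
  using des unfolding spherical_2_design_def by blast

lemma sum_inner_inner: "x \<in> X \<Longrightarrow> y \<in> X \<Longrightarrow> (\<Sum>z\<in>X. (x \<bullet> z) * (z \<bullet> y)) = n * (x \<bullet> y)"
  using des n_pos unfolding spherical_2_design_def by (auto simp: field_simps)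

lemma inner_set_nonempty: "inner_set X \<noteq> {}"
proof
  assume e: "inner_set X = {}"
  obtain x where x: "x \<in> X" using ne by blast
  have "X = {x}"
  proof (rule ccontr)
    assume "X \<noteq> {x}"
    then obtain y where "y \<in> X" "y \<noteq> x" using x by blast
    hence "x \<bullet> y \<in> inner_set X" using x unfolding inner_set_def by blast
    thus False using e by simp
  qed
  hence "x \<bullet> x = 0" using sum_inner_eq_0[OF x] by simp
  thus False using inner_self[OF x] by simp
qed

lemma card_inner_set_pos: "card (inner_set X) \<ge> 1"
  using inner_set_nonempty finite_inner_set by (simp add: Suc_le_eq card_gt_0_iff)

text \<open>Both design identities are used here: they make \<open>(1 + x \<bullet> y) / n\<close> the reproducing kernel of \<open>Pol\<^sub>1(X)\<close>.\<close>
lemma sum_affine_kernel_reproduces: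
  assumes g: "g \<in> PolX X 1" and y: "y \<in> X"
  shows "(\<Sum>x\<in>X. (1 + x \<bullet> y) * g x) = n * g y"
proof -
  obtain c0 c1 where c: "\<forall>x\<in>X. g x = (\<Sum>a\<in>X. c0 a + c1 a * (a \<bullet> x))" using PolX1_affine[OF g] by blast
  have inner: "(\<Sum>x\<in>X. (1 + x \<bullet> y) * (c0 a + c1 a * (a \<bullet> x))) = n * (c0 a + c1 a * (a \<bullet> y))"
    if a: "a \<in> X" for a
  proof -
    have "(\<Sum>x\<in>X. (1 + x \<bullet> y) * (c0 a + c1 a * (a \<bullet> x)))
       = c0 a * n + c0 a * (\<Sum>x\<in>X. y \<bullet> x) + c1 a * (\<Sum>x\<in>X. a \<bullet> x) + c1 a * (\<Sum>x\<in>X. (a \<bullet> x) * (x \<bullet> y))"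
      by (simp add: algebra_simps sum.distrib sum_distrib_left inner_commute)
    also have "\<dots> = n * (c0 a + c1 a * (a \<bullet> y))"
      using sum_inner_eq_0[OF y] sum_inner_eq_0[OF a] sum_inner_inner[OF a y] by (simp add: algebra_simps)
    finally show ?thesis .
  qed
  have "(\<Sum>x\<in>X. (1 + x \<bullet> y) * g x) = (\<Sum>x\<in>X. \<Sum>a\<in>X. (1 + x \<bullet> y) * (c0 a + c1 a * (a \<bullet> x)))"
    using c by (simp add: sum_distrib_left)
  also have "\<dots> = (\<Sum>a\<in>X. \<Sum>x\<in>X. (1 + x \<bullet> y) * (c0 a + c1 a * (a \<bullet> x)))" by (rule sum.swap)
  also have "\<dots> = (\<Sum>a\<in>X. n * (c0 a + c1 a * (a \<bullet> y)))" using inner by simp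
  also have "\<dots> = n * g y" using c y by (simp add: sum_distrib_left)
  finally show ?thesis .
qed

lemma proj_pol_1: assumes xy: "x \<in> X" "y \<in> X" shows "proj_pol 1 x y = (1 + x \<bullet> y) / n"
proof -
  define J where "J = (\<lambda>x y. if x \<in> X \<and> y \<in> X then (1 + x \<bullet> y) / n else 0)"
  have "is_orth_proj X (PolX X 1) J"
    unfolding is_orth_proj_def
  proof (intro conjI allI ballI)
    show "is_matX X J" unfolding is_matX_def J_def by auto
    show "\<And>x y. J x y = J y x" unfolding J_def by (auto simp: inner_commute)
    fix f assume f: "f \<in> CX X"
    define p where "p = (\<lambda>a. [: f a / n, f a / n :])"
    have "mat_app X J f x = (if x \<in> X then (\<Sum>a\<in>X. poly (p a) (a \<bullet> x)) else 0)" for x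
      unfolding mat_app_def J_def p_def
      by (auto intro!: sum.cong simp: algebra_simps inner_commute add_divide_distrib)
    moreover have "degree (p a) \<le> 1" for a unfolding p_def by simp
    ultimately show "mat_app X J f \<in> PolX X 1" unfolding PolX_def by blast
    fix g assume g: "g \<in> PolX X 1"
    have "inner_on X (mat_app X J f) g = (\<Sum>x\<in>X. \<Sum>y\<in>X. (1 + x \<bullet> y) / n * f y * g x)"
      unfolding inner_on_def mat_app_def J_def by (simp add: sum_distrib_right)
    also have "\<dots> = (\<Sum>y\<in>X. \<Sum>x\<in>X. (1 + x \<bullet> y) / n * f y * g x)" by (rule sum.swap)
    also have "\<dots> = (\<Sum>y\<in>X. f y * ((\<Sum>x\<in>X. (1 + x \<bullet> y) * g x) / n))"
      by (simp add: sum_distrib_left sum_divide_distrib algebra_simps)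
    also have "\<dots> = (\<Sum>y\<in>X. f y * g y)" using sum_affine_kernel_reproduces[OF g] n_pos by simp
    finally show "inner_on X (\<lambda>x. f x - mat_app X J f x) g = 0"
      by (simp add: inner_on_diff_left inner_on_def)
  qed
  hence JP: "J = proj_pol 1" by (rule proj_pol_unique)
  show ?thesis using xy unfolding JP[symmetric] J_def by simp
qed

lemma proj_harm_1: assumes "x \<in> X" "y \<in> X" shows "n * proj_harm 1 x y = x \<bullet> y"
proof -
  have "proj_harm 1 x y = proj_pol 1 x y - proj_pol 0 x y" by (simp add: proj_harm_def)
  thus ?thesis using n_pos unfolding proj_pol_0[OF assms] proj_pol_1[OF assms] by (simp add: field_simps)
qed

end

locale sph_2_design_pred = sph_2_design X for X :: "(real^'m::finite) set" +
  fixes s :: nat and q :: "nat \<Rightarrow> real poly"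
  assumes card_inner_set_eq: "card (inner_set X) = s"
    and predegree: "predegree_polys X s q"
begin

lemma q_nonzero: "k \<le> s \<Longrightarrow> q k \<noteq> 0" using predegree unfolding predegree_polys_def by blast
lemma degree_q: "k \<le> s \<Longrightarrow> degree (q k) = k" using predegree unfolding predegree_polys_def by blast
lemma pred_inner_q_q: "k \<le> s \<Longrightarrow> h \<le> s \<Longrightarrow> pred_inner (poly (q k)) (poly (q h)) = (if k = h then poly (q k) (real CARD('m)) else 0)"
  using predegree unfolding predegree_polys_def pred_ip_eq_pred_inner by blast

lemma card_inner_set'_eq: "card (inner_set' X) = Suc s" using card_inner_set' card_inner_set_eq by simp

lemma poly_nonzero_on_inner_set':
  assumes "p \<noteq> 0" "degree p \<le> s" shows "\<exists>\<alpha>\<in>inner_set' X. poly p \<alpha> \<noteq> 0"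
proof (rule ccontr)
  assume "\<not> ?thesis"
  hence "inner_set' X \<subseteq> {x. poly p x = 0}" by auto
  hence "card (inner_set' X) \<le> card {x. poly p x = 0}"
    using poly_roots_finite[OF assms(1)] by (rule card_mono[rotated])
  also have "\<dots> \<le> degree p" by (rule card_poly_roots_bound[OF assms(1)])
  finally show False using card_inner_set'_eq assms(2) by simp
qed

lemma q_at_m_pos: "k \<le> s \<Longrightarrow> poly (q k) (real CARD('m)) > 0"
proof -
  assume k: "k \<le> s"
  have e: "pred_inner (poly (q k)) (poly (q k)) = poly (q k) (real CARD('m))" using pred_inner_q_q[OF k k] by simp
  obtain \<alpha> where a: "\<alpha> \<in> inner_set' X" "poly (q k) \<alpha> \<noteq> 0"
    using poly_nonzero_on_inner_set'[OF q_nonzero[OF k]] degree_q[OF k] k by auto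
  have "pred_inner (poly (q k)) (poly (q k)) \<noteq> 0" using pred_inner_self_eq_0 a by blast
  thus ?thesis using pred_inner_self_nonneg[of "poly (q k)"] e by linarith
qed

lemma lead_coeff_q_nonzero: "k \<le> s \<Longrightarrow> coeff (q k) k \<noteq> 0"
  using q_nonzero degree_q by (metis leading_coeff_0_iff)

lemma q_basis:
  "k \<le> s \<Longrightarrow> degree g \<le> k \<Longrightarrow> \<exists>e. g = (\<Sum>i\<le>k. smult (e i) (q i))"
proof (induction k arbitrary: g)
  case 0
  have q0: "degree (q 0) = 0" using degree_q by simp
  define c where "c = coeff g 0 / coeff (q 0) 0"
  have "g = smult c (q 0)"
  proof (rule poly_eqI)
    fix l show "coeff g l = coeff (smult c (q 0)) l"
    proof (cases l)
      case 0 thus ?thesis using lead_coeff_q_nonzero[of 0] by (simp add: c_def)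
    next
      case (Suc m) thus ?thesis using 0 q0 by (simp add: coeff_eq_0)
    qed
  qed
  thus ?case by (intro exI[of _ "\<lambda>_. c"]) simp
next
  case (Suc k)
  define c where "c = coeff g (Suc k) / coeff (q (Suc k)) (Suc k)"
  define g' where "g' = g - smult c (q (Suc k))"
  have dg': "degree g' \<le> k"
  proof (rule degree_le, intro allI impI)
    fix l assume l: "k < l"
    show "coeff g' l = 0"
    proof (cases "l = Suc k")
      case True thus ?thesis using lead_coeff_q_nonzero[OF Suc.prems(1)] by (simp add: g'_def c_def)
    next
      case False hence "Suc k < l" using l by simp
      thus ?thesis using Suc.prems degree_q[OF Suc.prems(1)] by (simp add: g'_def coeff_eq_0)
    qed
  qed
  obtain e where e: "g' = (\<Sum>i\<le>k. smult (e i) (q i))" using Suc.IH[OF _ dg'] Suc.prems by auto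
  define e' where "e' = e(Suc k := c)"
  have "(\<Sum>i\<le>Suc k. smult (e' i) (q i)) = (\<Sum>i\<le>k. smult (e i) (q i)) + smult c (q (Suc k))"
    by (simp add: e'_def)
  also have "\<dots> = g" using e by (simp add: g'_def)
  finally show ?case by (intro exI[of _ e']) simp
qed

lemma q_basis_top_coeff:
  assumes "k \<le> s" "g = (\<Sum>i\<le>k. smult (e i) (q i))" shows "coeff g k = e k * coeff (q k) k"
proof -
  have "coeff g k = (\<Sum>i\<le>k. e i * coeff (q i) k)" using assms(2) by (simp add: coeff_sum)
  also have "\<dots> = (\<Sum>i\<le>k. if i = k then e k * coeff (q k) k else 0)"
  proof (intro sum.cong refl)
    fix i assume "i \<in> {..k}"
    thus "e i * coeff (q i) k = (if i = k then e k * coeff (q k) k else 0)"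
      using degree_q[of i] assms(1) by (auto simp: coeff_eq_0)
  qed
  finally show ?thesis by simp
qed

lemma pred_inner_q_basis:
  assumes "k \<le> s" "h \<le> s" "g = (\<Sum>i\<le>k. smult (e i) (q i))"
  shows "pred_inner (poly g) (poly (q h)) = (if h \<le> k then e h * poly (q h) (real CARD('m)) else 0)"
proof -
  have "pred_inner (poly g) (poly (q h)) = (\<Sum>i\<le>k. e i * pred_inner (poly (q i)) (poly (q h)))"
  proof -
    have "poly g = (\<lambda>t. \<Sum>i\<le>k. e i * poly (q i) t)" using assms(3) by (simp add: poly_sum fun_eq_iff)
    thus ?thesis using pred_inner_sum_left[of "{..k}" e "\<lambda>i. poly (q i)"] by simp
  qed
  also have "\<dots> = (\<Sum>i\<le>k. if i = h then e h * poly (q h) (real CARD('m)) else 0)"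
    using assms(1,2) by (intro sum.cong refl) (auto simp: pred_inner_q_q)
  finally show ?thesis by simp
qed

definition lagrange_poly :: "real \<Rightarrow> real poly" where
  "lagrange_poly \<beta> = smult (1 / (\<Prod>\<gamma>\<in>inner_set' X - {\<beta>}. (\<beta> - \<gamma>))) (\<Prod>\<gamma>\<in>inner_set' X - {\<beta>}. [:-\<gamma>, 1:])"

lemma lagrange_poly_deg: "\<beta> \<in> inner_set' X \<Longrightarrow> degree (lagrange_poly \<beta>) \<le> s"
proof -
  assume b: "\<beta> \<in> inner_set' X"
  have "degree (\<Prod>\<gamma>\<in>inner_set' X - {\<beta>}. [:-\<gamma>, 1:]) \<le> (\<Sum>\<gamma>\<in>inner_set' X - {\<beta>}. degree [:-\<gamma>, 1:])"
    using degree_prod_sum_le[of "inner_set' X - {\<beta>}" "\<lambda>\<gamma>. [:-\<gamma>, 1:]"] finite_inner_set' by (simp add: o_def)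
  also have "\<dots> = card (inner_set' X - {\<beta>})" by simp
  also have "\<dots> = s" using b card_inner_set'_eq finite_inner_set' by simp
  finally show ?thesis unfolding lagrange_poly_def by (simp add: order.trans[OF degree_smult_le])
qed

lemma lagrange_poly_val: "\<beta> \<in> inner_set' X \<Longrightarrow> \<alpha> \<in> inner_set' X \<Longrightarrow> poly (lagrange_poly \<beta>) \<alpha> = (if \<alpha> = \<beta> then 1 else 0)"
proof -
  assume b: "\<beta> \<in> inner_set' X" and a: "\<alpha> \<in> inner_set' X"
  have nz: "(\<Prod>\<gamma>\<in>inner_set' X - {\<beta>}. (\<beta> - \<gamma>)) \<noteq> 0" using finite_inner_set' by simp
  show ?thesis
  proof (cases "\<alpha> = \<beta>")
    case True thus ?thesis using nz by (simp add: lagrange_poly_def poly_prod)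
  next
    case False
    hence "\<alpha> \<in> inner_set' X - {\<beta>}" using a by simp
    thus ?thesis using False finite_inner_set' by (simp add: lagrange_poly_def poly_prod prod_zero_iff)
  qed
qed

lemma q_expansion: "\<exists>e. \<forall>\<alpha>\<in>inner_set' X. \<phi> \<alpha> = (\<Sum>i\<le>s. e i * poly (q i) \<alpha>)"
proof -
  define L where "L = (\<Sum>\<beta>\<in>inner_set' X. smult (\<phi> \<beta>) (lagrange_poly \<beta>))"
  have dL: "degree L \<le> s" unfolding L_def
    by (intro degree_sum_le finite_inner_set') (simp add: order.trans[OF degree_smult_le] lagrange_poly_deg)
  obtain e where e: "L = (\<Sum>i\<le>s. smult (e i) (q i))" using q_basis[OF order.refl dL] by blast
  have "\<phi> \<alpha> = (\<Sum>i\<le>s. e i * poly (q i) \<alpha>)" if a: "\<alpha> \<in> inner_set' X" for \<alpha>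
  proof -
    have "poly L \<alpha> = (\<Sum>\<beta>\<in>inner_set' X. \<phi> \<beta> * (if \<alpha> = \<beta> then 1 else 0))"
      unfolding L_def poly_sum using a by (intro sum.cong) (auto simp: lagrange_poly_val)
    also have "\<dots> = \<phi> \<alpha>" using a finite_inner_set' by (simp add: if_distrib cong: if_cong)
    finally show ?thesis using e by (simp add: poly_sum)
  qed
  thus ?thesis by blast
qed

lemma pred_inner_q_expansion:
  assumes e: "\<forall>\<alpha>\<in>inner_set' X. \<phi> \<alpha> = (\<Sum>i\<le>s. e i * poly (q i) \<alpha>)" and k: "k \<le> s"
  shows "pred_inner \<phi> (poly (q k)) = e k * poly (q k) (real CARD('m))"
proof -
  have "pred_inner \<phi> (poly (q k)) = pred_inner (\<lambda>t. \<Sum>i\<le>s. e i * poly (q i) t) (poly (q k))"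
    using e by (intro pred_inner_cong) auto
  also have "\<dots> = (\<Sum>i\<le>s. e i * pred_inner (poly (q i)) (poly (q k)))" by (rule pred_inner_sum_left) simp
  also have "\<dots> = (\<Sum>i\<le>s. if i = k then e k * poly (q k) (real CARD('m)) else 0)"
    using k by (intro sum.cong refl) (auto simp: pred_inner_q_q)
  finally show ?thesis using k by simp
qed

lemma s_ge_1: "s \<ge> 1" using card_inner_set_pos card_inner_set_eq by simp

lemma degree_pCons_0_q: "k \<le> s \<Longrightarrow> degree (pCons 0 (q k)) = Suc k"
  using q_nonzero degree_q by (simp add: degree_pCons_eq)

lemma pred_inner_mult_q_q_eq_0:
  assumes j: "j < s" and k: "k \<le> s" "k < j \<or> Suc (Suc j) < k"
  shows "pred_inner (\<lambda>t. t * poly (q (Suc j)) t) (poly (q k)) = 0"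
  using k(2)
proof
  assume kj: "k < j"
  have dk: "degree (pCons 0 (q k)) \<le> j" using degree_pCons_0_q[OF k(1)] kj by simp
  obtain d where d: "pCons 0 (q k) = (\<Sum>i\<le>j. smult (d i) (q i))" using q_basis[OF _ dk] j by auto
  have "pred_inner (\<lambda>t. t * poly (q (Suc j)) t) (poly (q k)) = pred_inner (poly (pCons 0 (q k))) (poly (q (Suc j)))"
    unfolding pred_inner_shift by (rule pred_inner_commute)
  also have "\<dots> = 0" using pred_inner_q_basis[OF _ _ d, of "Suc j"] j by simp
  finally show ?thesis .
next
  assume kj: "Suc (Suc j) < k"
  have ds: "degree (pCons 0 (q (Suc j))) \<le> Suc (Suc j)" using degree_pCons_0_q[of "Suc j"] j by simp
  obtain d where d: "pCons 0 (q (Suc j)) = (\<Sum>i\<le>Suc (Suc j). smult (d i) (q i))"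
    using q_basis[OF _ ds] k kj by auto
  have "pred_inner (\<lambda>t. t * poly (q (Suc j)) t) (poly (q k)) = pred_inner (poly (pCons 0 (q (Suc j)))) (poly (q k))"
    unfolding pred_inner_pCons ..
  also have "\<dots> = 0" using pred_inner_q_basis[OF _ k(1) d] k kj by simp
  finally show ?thesis .
qed

lemma pred_inner_mult_q_q_nonzero:
  assumes j: "j < s"
  shows "pred_inner (\<lambda>t. t * poly (q (Suc j)) t) (poly (q j)) \<noteq> 0"
proof -
  have js: "j \<le> s" using j by simp
  have ds: "degree (pCons 0 (q j)) \<le> Suc j" using degree_pCons_0_q[OF js] by simp
  obtain d where d: "pCons 0 (q j) = (\<Sum>i\<le>Suc j. smult (d i) (q i))" using q_basis[OF _ ds] j by auto
  have "coeff (pCons 0 (q j)) (Suc j) = d (Suc j) * coeff (q (Suc j)) (Suc j)"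
    by (rule q_basis_top_coeff[OF _ d]) (use j in simp)
  hence dnz: "d (Suc j) \<noteq> 0" using lead_coeff_q_nonzero[OF js] by auto
  have "pred_inner (\<lambda>t. t * poly (q (Suc j)) t) (poly (q j)) = pred_inner (poly (pCons 0 (q j))) (poly (q (Suc j)))"
    unfolding pred_inner_shift by (rule pred_inner_commute)
  also have "\<dots> = d (Suc j) * poly (q (Suc j)) (real CARD('m))"
    using pred_inner_q_basis[OF _ _ d, of "Suc j"] j by simp
  finally show ?thesis using dnz q_at_m_pos[of "Suc j"] j by auto
qed

lemma three_term_recurrence:
  assumes j: "j < s"
  shows "\<exists>a b c. c \<noteq> 0 \<and> (\<forall>\<alpha>\<in>inner_set' X. \<alpha> * poly (q (Suc j)) \<alpha> =
      a * (if Suc (Suc j) \<le> s then poly (q (Suc (Suc j))) \<alpha> else 0) + b * poly (q (Suc j)) \<alpha> + c * poly (q j) \<alpha>)"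
proof -
  define \<phi> where "\<phi> = (\<lambda>\<alpha>::real. \<alpha> * poly (q (Suc j)) \<alpha>)"
  obtain e where e: "\<forall>\<alpha>\<in>inner_set' X. \<phi> \<alpha> = (\<Sum>i\<le>s. e i * poly (q i) \<alpha>)" using q_expansion by blast
  have e_eq: "e k = pred_inner \<phi> (poly (q k)) / poly (q k) (real CARD('m))" if "k \<le> s" for k
    using pred_inner_q_expansion[OF e that] q_at_m_pos[OF that] by simp
  have e_0: "e k = 0" if "k \<le> s" "k < j \<or> Suc (Suc j) < k" for k
    using e_eq pred_inner_mult_q_q_eq_0[OF j that] that unfolding \<phi>_def by simp
  have e_j: "e j \<noteq> 0" using e_eq pred_inner_mult_q_q_nonzero[OF j] q_at_m_pos[of j] j unfolding \<phi>_def by simp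
  have sum3: "(\<Sum>i\<le>s. e i * poly (q i) \<alpha>) =
      e (Suc (Suc j)) * (if Suc (Suc j) \<le> s then poly (q (Suc (Suc j))) \<alpha> else 0)
      + e (Suc j) * poly (q (Suc j)) \<alpha> + e j * poly (q j) \<alpha>" for \<alpha>
  proof -
    have "(\<Sum>i\<le>s. e i * poly (q i) \<alpha>) = (\<Sum>i\<in>{j, Suc j, Suc (Suc j)} \<inter> {..s}. e i * poly (q i) \<alpha>)"
    proof (rule sum.mono_neutral_right)
      show "\<forall>i\<in>{..s} - {j, Suc j, Suc (Suc j)} \<inter> {..s}. e i * poly (q i) \<alpha> = 0"
      proof
        fix i assume "i \<in> {..s} - {j, Suc j, Suc (Suc j)} \<inter> {..s}"
        hence "i \<le> s" and "i \<noteq> j" "i \<noteq> Suc j" "i \<noteq> Suc (Suc j)" by auto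
        hence "i \<le> s" "i < j \<or> Suc (Suc j) < i" by arith+
        thus "e i * poly (q i) \<alpha> = 0" using e_0 by simp
      qed
    qed auto
    also have "\<dots> = e (Suc (Suc j)) * (if Suc (Suc j) \<le> s then poly (q (Suc (Suc j))) \<alpha> else 0)
      + e (Suc j) * poly (q (Suc j)) \<alpha> + e j * poly (q j) \<alpha>"
    proof (cases "Suc (Suc j) \<le> s")
      case True
      hence "{j, Suc j, Suc (Suc j)} \<inter> {..s} = {j, Suc j, Suc (Suc j)}" by auto
      thus ?thesis using True by simp
    next
      case False
      hence "{j, Suc j, Suc (Suc j)} \<inter> {..s} = {j, Suc j}" using j by auto
      thus ?thesis using False by simp
    qed
    finally show ?thesis .
  qed
  show ?thesis
    by (rule exI[of _ "e (Suc (Suc j))"], rule exI[of _ "e (Suc j)"], rule exI[of _ "e j"])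
       (use e_j e sum3 in \<open>simp add: \<phi>_def\<close>)
qed

definition kernel_poly :: "real poly" where "kernel_poly = (\<Sum>k<s. q k)"

lemma kernel_poly_deg: "degree kernel_poly \<le> s - 1"
  unfolding kernel_poly_def by (intro degree_sum_le) (auto simp: degree_q)

lemma pred_inner_sum_right: "finite I \<Longrightarrow> pred_inner \<phi> (\<lambda>t. \<Sum>i\<in>I. f i t) = (\<Sum>i\<in>I. pred_inner \<phi> (f i))"
  using pred_inner_sum_left[of I "\<lambda>_. 1" f \<phi>] by (simp add: pred_inner_commute)

lemma kernel_poly_reproduces: assumes "degree w \<le> s - 1" shows "pred_inner (poly w) (poly kernel_poly) = poly w (real CARD('m))"
proof -
  obtain d where d: "w = (\<Sum>i\<le>s - 1. smult (d i) (q i))" using q_basis[OF _ assms] by auto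
  have "pred_inner (poly w) (poly kernel_poly) = (\<Sum>k<s. pred_inner (poly w) (poly (q k)))"
    unfolding kernel_poly_def poly_sum by (rule pred_inner_sum_right) simp
  also have "\<dots> = (\<Sum>k<s. d k * poly (q k) (real CARD('m)))"
    using pred_inner_q_basis[OF _ _ d] by (intro sum.cong refl) auto
  also have "{..<s} = {..s - 1}" using s_ge_1 by auto
  also have "(\<Sum>k\<le>s - 1. d k * poly (q k) (real CARD('m))) = poly w (real CARD('m))"
    using d by (simp add: poly_sum)
  finally show ?thesis .
qed

lemma sum_q_eq: assumes a: "\<alpha> \<in> inner_set' X"
  shows "(\<Sum>k\<le>s. poly (q k) \<alpha>) = (if \<alpha> = real CARD('m) then n else 0)"
proof -
  define \<phi> where "\<phi> = (\<lambda>\<alpha>::real. if \<alpha> = real CARD('m) then n else 0)"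
  obtain e where e: "\<forall>\<alpha>\<in>inner_set' X. \<phi> \<alpha> = (\<Sum>i\<le>s. e i * poly (q i) \<alpha>)" using q_expansion by blast
  have e1: "e k = 1" if k: "k \<le> s" for k
  proof -
    have inner: "(\<Sum>y\<in>X. \<phi> (x \<bullet> y) * poly (q k) (x \<bullet> y)) = n * poly (q k) (real CARD('m))"
      if x: "x \<in> X" for x
    proof -
      have "(\<Sum>y\<in>X. \<phi> (x \<bullet> y) * poly (q k) (x \<bullet> y)) = (\<Sum>y\<in>X. if y = x then n * poly (q k) (real CARD('m)) else 0)"
      proof (intro sum.cong refl)
        fix y assume y: "y \<in> X"
        show "\<phi> (x \<bullet> y) * poly (q k) (x \<bullet> y) = (if y = x then n * poly (q k) (real CARD('m)) else 0)"
        proof (cases "y = x")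
          case True thus ?thesis using inner_self[OF x] by (simp add: \<phi>_def)
        next
          case False hence "x \<bullet> y \<noteq> real CARD('m)" using inner_eq_m_iff[OF x y] by auto
          thus ?thesis using False by (simp add: \<phi>_def)
        qed
      qed
      thus ?thesis using x fin by simp
    qed
    have "pred_inner \<phi> (poly (q k)) = (\<Sum>x\<in>X. n * poly (q k) (real CARD('m))) / n\<^sup>2"
      unfolding pred_inner_def using inner by simp
    also have "\<dots> = poly (q k) (real CARD('m))" using n_pos by (simp add: power2_eq_square)
    finally show ?thesis using pred_inner_q_expansion[OF e k] q_at_m_pos[OF k] by simp
  qed
  have "\<phi> \<alpha> = (\<Sum>k\<le>s. poly (q k) \<alpha>)" using e a e1 by simp
  thus ?thesis unfolding \<phi>_def by simp
qed

abbreviation "proj_low \<equiv> proj_pol (s - 1)"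

lemma trace_proj_harm_s: "traceX X (projF X s) = n - traceX X proj_low"
proof -
  have "traceX X (projF X s) = (\<Sum>x\<in>X. 1 - proj_low x x)"
    unfolding traceX_def projF_eq proj_harm_def using s_ge_1 proj_pol_top card_inner_set_eq by (intro sum.cong) auto
  thus ?thesis unfolding traceX_def by (simp add: sum_subtractf)
qed

lemma kernel_poly_col_in_PolX: "y \<in> X \<Longrightarrow> zero_ext X (\<lambda>w. poly kernel_poly (w \<bullet> y)) \<in> PolX X (s - 1)"
  using PolX_zeta[OF fin _ kernel_poly_deg, of y] by (simp add: inner_commute)

lemma sum_proj_pol_kernel_poly: "y \<in> X \<Longrightarrow> (\<Sum>x\<in>X. proj_low y x * poly kernel_poly (x \<bullet> y)) = poly kernel_poly (real CARD('m))"
proof -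
  assume y: "y \<in> X"
  have "mat_app X proj_low (zero_ext X (\<lambda>w. poly kernel_poly (w \<bullet> y))) = zero_ext X (\<lambda>w. poly kernel_poly (w \<bullet> y))"
    by (rule proj_pol_fixes[OF kernel_poly_col_in_PolX[OF y]])
  hence "mat_app X proj_low (zero_ext X (\<lambda>w. poly kernel_poly (w \<bullet> y))) y = zero_ext X (\<lambda>w. poly kernel_poly (w \<bullet> y)) y" by simp
  thus ?thesis using y inner_self[OF y] unfolding mat_app_def zero_ext_def
    by (simp cong: sum.cong add: if_distrib)
qed

lemma sum_kernel_poly_sq: "(\<Sum>x\<in>X. \<Sum>y\<in>X. poly kernel_poly (x \<bullet> y) * poly kernel_poly (x \<bullet> y)) = n\<^sup>2 * poly kernel_poly (real CARD('m))"
proof -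
  have "pred_inner (poly kernel_poly) (poly kernel_poly) = poly kernel_poly (real CARD('m))" by (rule kernel_poly_reproduces[OF kernel_poly_deg])
  thus ?thesis unfolding pred_inner_def using n_pos by (simp add: field_simps)
qed

lemma sum_sq_proj_pol_minus_kernel:
  "(\<Sum>x\<in>X. \<Sum>y\<in>X. (n * proj_low x y - poly kernel_poly (x \<bullet> y))\<^sup>2) = n\<^sup>2 * (traceX X proj_low - poly kernel_poly (real CARD('m)))"
proof -
  have a: "(\<Sum>x\<in>X. \<Sum>y\<in>X. proj_low x y * proj_low x y) = traceX X proj_low" unfolding traceX_def using sum_proj_pol_sq by simp
  have b: "(\<Sum>x\<in>X. \<Sum>y\<in>X. proj_low x y * poly kernel_poly (x \<bullet> y)) = n * poly kernel_poly (real CARD('m))"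
  proof -
    have "(\<Sum>x\<in>X. \<Sum>y\<in>X. proj_low x y * poly kernel_poly (x \<bullet> y)) = (\<Sum>y\<in>X. \<Sum>x\<in>X. proj_low y x * poly kernel_poly (x \<bullet> y))"
    proof (subst sum.swap, intro sum.cong refl)
      fix x y show "proj_low x y * poly kernel_poly (x \<bullet> y) = proj_low y x * poly kernel_poly (x \<bullet> y)" using proj_pol_sym[of "s-1" x y] by simp
    qed
    also have "\<dots> = (\<Sum>y\<in>X. poly kernel_poly (real CARD('m)))" using sum_proj_pol_kernel_poly by simp
    finally show ?thesis by simp
  qed
  have "(\<Sum>x\<in>X. \<Sum>y\<in>X. (n * proj_low x y - poly kernel_poly (x \<bullet> y))\<^sup>2)
      = n\<^sup>2 * (\<Sum>x\<in>X. \<Sum>y\<in>X. proj_low x y * proj_low x y) - 2 * n * (\<Sum>x\<in>X. \<Sum>y\<in>X. proj_low x y * poly kernel_poly (x \<bullet> y))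
        + (\<Sum>x\<in>X. \<Sum>y\<in>X. poly kernel_poly (x \<bullet> y) * poly kernel_poly (x \<bullet> y))"
    by (simp add: power2_eq_square algebra_simps sum.distrib sum_subtractf sum_distrib_left)
  also have "\<dots> = n\<^sup>2 * (traceX X proj_low - poly kernel_poly (real CARD('m)))"
    unfolding a b sum_kernel_poly_sq by (simp add: power2_eq_square algebra_simps)
  finally show ?thesis .
qed

lemma kernel_poly_le_trace: "poly kernel_poly (real CARD('m)) \<le> traceX X proj_low"
proof -
  have "0 \<le> (\<Sum>x\<in>X. \<Sum>y\<in>X. (n * proj_low x y - poly kernel_poly (x \<bullet> y))\<^sup>2)" by (intro sum_nonneg) auto
  thus ?thesis unfolding sum_sq_proj_pol_minus_kernel using n_pos by (simp add: zero_le_mult_iff)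
qed

lemma trace_eq_kernel_poly_iff: "traceX X proj_low = poly kernel_poly (real CARD('m)) \<longleftrightarrow> (\<forall>x\<in>X. \<forall>y\<in>X. n * proj_low x y = poly kernel_poly (x \<bullet> y))"
proof
  assume e: "traceX X proj_low = poly kernel_poly (real CARD('m))"
  hence z: "(\<Sum>x\<in>X. \<Sum>y\<in>X. (n * proj_low x y - poly kernel_poly (x \<bullet> y))\<^sup>2) = 0" unfolding sum_sq_proj_pol_minus_kernel by simp
  show "\<forall>x\<in>X. \<forall>y\<in>X. n * proj_low x y = poly kernel_poly (x \<bullet> y)"
  proof (intro ballI)
    fix x y assume x: "x \<in> X" and y: "y \<in> X"
    have "(\<Sum>y\<in>X. (n * proj_low x y - poly kernel_poly (x \<bullet> y))\<^sup>2) = 0"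
      using z sum_nonneg_eq_0_iff[OF fin, of "\<lambda>x. \<Sum>y\<in>X. (n * proj_low x y - poly kernel_poly (x \<bullet> y))\<^sup>2"] x
      by (simp add: sum_nonneg)
    hence "(n * proj_low x y - poly kernel_poly (x \<bullet> y))\<^sup>2 = 0"
      using sum_nonneg_eq_0_iff[OF fin, of "\<lambda>y. (n * proj_low x y - poly kernel_poly (x \<bullet> y))\<^sup>2"] y by simp
    thus "n * proj_low x y = poly kernel_poly (x \<bullet> y)" by simp
  qed
next
  assume e: "\<forall>x\<in>X. \<forall>y\<in>X. n * proj_low x y = poly kernel_poly (x \<bullet> y)"
  have "(\<Sum>x\<in>X. \<Sum>y\<in>X. (n * proj_low x y - poly kernel_poly (x \<bullet> y))\<^sup>2) = 0" using e by simp
  thus "traceX X proj_low = poly kernel_poly (real CARD('m))" unfolding sum_sq_proj_pol_minus_kernel using n_pos by simp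
qed

lemma q_s_at_m: "poly (q s) (real CARD('m)) = n - poly kernel_poly (real CARD('m))"
proof -
  have m: "real CARD('m) \<in> inner_set' X" unfolding inner_set'_def by simp
  have "(\<Sum>k\<le>s. poly (q k) (real CARD('m))) = n" using sum_q_eq[OF m] by simp
  moreover have "(\<Sum>k\<le>s. poly (q k) (real CARD('m))) = poly kernel_poly (real CARD('m)) + poly (q s) (real CARD('m))"
    unfolding kernel_poly_def poly_sum by (simp add: lessThan_Suc_atMost[symmetric])
  ultimately show ?thesis by simp
qed

lemma trace_proj_harm_le: "traceX X (projF X s) \<le> poly (q s) (real CARD('m))"
  using kernel_poly_le_trace unfolding trace_proj_harm_s q_s_at_m by simp

lemma trace_proj_harm_eq_iff: "traceX X (projF X s) = poly (q s) (real CARD('m)) \<longleftrightarrow> traceX X proj_low = poly kernel_poly (real CARD('m))"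
  unfolding trace_proj_harm_s q_s_at_m by auto

definition harm_is_q :: "nat \<Rightarrow> bool" where
  "harm_is_q k \<longleftrightarrow> (\<forall>x\<in>X. \<forall>y\<in>X. n * proj_harm k x y = poly (q k) (x \<bullet> y))"

context
  assumes kernel: "\<forall>x\<in>X. \<forall>y\<in>X. n * proj_low x y = poly kernel_poly (x \<bullet> y)"
begin

lemma harm_is_q_s: "harm_is_q s"
  unfolding harm_is_q_def
proof (intro ballI)
  fix x y assume x: "x \<in> X" and y: "y \<in> X"
  have "(\<Sum>k\<le>s. poly (q k) (x \<bullet> y)) = poly kernel_poly (x \<bullet> y) + poly (q s) (x \<bullet> y)"
    unfolding kernel_poly_def poly_sum by (simp add: lessThan_Suc_atMost[symmetric])
  moreover have "(\<Sum>k\<le>s. poly (q k) (x \<bullet> y)) = (if x = y then n else 0)"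
    using sum_q_eq[OF inner_in_inner_set'[OF x y]] inner_eq_m_iff[OF x y] by simp
  moreover have "proj_harm s x y = (if x = y then 1 else 0) - proj_low x y"
    using s_ge_1 proj_pol_top[OF x y] card_inner_set_eq by (simp add: proj_harm_def)
  hence "n * proj_harm s x y = (if x = y then n else 0) - n * proj_low x y"
    by (simp add: right_diff_distrib)
  moreover have "n * proj_low x y = poly kernel_poly (x \<bullet> y)" using kernel x y by blast
  ultimately show "n * proj_harm s x y = poly (q s) (x \<bullet> y)" by linarith
qed

context
  fixes j assumes j: "j < s" and above: "\<And>k. Suc j \<le> k \<Longrightarrow> k \<le> s \<Longrightarrow> harm_is_q k"
begin

lemma sum_q_mult_lower_eq_0:
  assumes k: "Suc j \<le> k" "k \<le> s" and y: "y \<in> X" and h: "h \<in> PolX X (k - 1)"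
  shows "(\<Sum>w\<in>X. poly (q k) (w \<bullet> y) * h w) = 0"
proof -
  have "(\<Sum>w\<in>X. poly (q k) (w \<bullet> y) * h w) = (\<Sum>w\<in>X. n * (proj_harm k y w * h w))"
  proof (intro sum.cong refl)
    fix w assume w: "w \<in> X"
    have "n * proj_harm k w y = poly (q k) (w \<bullet> y)" using above[OF k] w y unfolding harm_is_q_def by blast
    thus "poly (q k) (w \<bullet> y) * h w = n * (proj_harm k y w * h w)" using proj_harm_sym[of k w y] by simp
  qed
  also have "\<dots> = n * mat_app X (proj_harm k) h y" using y by (simp add: mat_app_def sum_distrib_left)
  also have "\<dots> = 0" using proj_harm_annihilates_lower[of k h] k h by simp
  finally show ?thesis .
qed

lemma n_proj_pol_eq_sum_q:
  assumes x: "x \<in> X" and y: "y \<in> X" shows "n * proj_pol j x y = (\<Sum>i\<le>j. poly (q i) (x \<bullet> y))"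
proof -
  have j1: "j \<le> s - 1" using j by simp
  have "proj_low x y = proj_pol j x y + (\<Sum>i\<in>{Suc j..s - 1}. proj_harm i x y)"
    unfolding proj_pol_eq_sum_proj_harm[of "s - 1"] proj_pol_eq_sum_proj_harm[of j] by (rule sum_atMost_split[OF j1])
  hence "n * proj_low x y = n * proj_pol j x y + (\<Sum>i\<in>{Suc j..s - 1}. n * proj_harm i x y)"
    by (simp add: algebra_simps sum_distrib_left)
  also have "(\<Sum>i\<in>{Suc j..s - 1}. n * proj_harm i x y) = (\<Sum>i\<in>{Suc j..s - 1}. poly (q i) (x \<bullet> y))"
    using above x y unfolding harm_is_q_def by (intro sum.cong refl) auto
  finally have "n * proj_low x y = n * proj_pol j x y + (\<Sum>i\<in>{Suc j..s - 1}. poly (q i) (x \<bullet> y))" .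
  moreover have "poly kernel_poly (x \<bullet> y) = (\<Sum>i\<le>j. poly (q i) (x \<bullet> y)) + (\<Sum>i\<in>{Suc j..s - 1}. poly (q i) (x \<bullet> y))"
    unfolding kernel_poly_def poly_sum sum_atMost_split[OF j1, symmetric] using s_ge_1 by (intro sum.cong) auto
  ultimately show ?thesis using kernel x y by simp
qed

text \<open>Multiplying the three-term recurrence by \<open>g\<close> and summing, every term except the one
  with \<open>q\<^sub>j\<close> is killed by \<open>F\<^sub>k\<close>, \<open>k > j\<close>, because \<open>(y \<bullet> w) g(w)\<close> still has degree \<open>\<le> j\<close>.\<close>
lemma q_col_orth_lower:
  assumes y: "y \<in> X" and j0: "0 < j" and g: "g \<in> PolX X (j - 1)"
  shows "inner_on X (zero_ext X (\<lambda>w. poly (q j) (w \<bullet> y))) g = 0"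
proof -
  obtain a b c where c: "c \<noteq> 0" and rec: "\<forall>\<alpha>\<in>inner_set' X. \<alpha> * poly (q (Suc j)) \<alpha> =
    a * (if Suc (Suc j) \<le> s then poly (q (Suc (Suc j))) \<alpha> else 0) + b * poly (q (Suc j)) \<alpha> + c * poly (q j) \<alpha>"
    using three_term_recurrence[OF j] by blast
  have "j - 1 \<le> j" "j - 1 \<le> Suc j" by simp_all
  hence gj: "g \<in> PolX X j" and gSj: "g \<in> PolX X (Suc j)"
    using g PolX_mono by blast+
  define h where "h = zero_ext X (\<lambda>w. (y \<bullet> w) * g w)"
  have "h \<in> PolX X (Suc j - 1)" unfolding h_def using PolX_mult_inner[OF y g] j0 by simp
  hence t1: "(\<Sum>w\<in>X. poly (q (Suc j)) (w \<bullet> y) * h w) = 0"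
    by (intro sum_q_mult_lower_eq_0[OF le_refl _ y]) (use j in simp)
  have t2: "(\<Sum>w\<in>X. (if Suc (Suc j) \<le> s then poly (q (Suc (Suc j))) (w \<bullet> y) else 0) * g w) = 0"
    using sum_q_mult_lower_eq_0[of "Suc (Suc j)" y g] y gSj by (cases "Suc (Suc j) \<le> s") simp_all
  have t3: "(\<Sum>w\<in>X. poly (q (Suc j)) (w \<bullet> y) * g w) = 0"
    by (intro sum_q_mult_lower_eq_0[OF le_refl _ y]) (use j gj in simp_all)
  have "c * inner_on X (zero_ext X (\<lambda>w. poly (q j) (w \<bullet> y))) g
      = (\<Sum>w\<in>X. poly (q (Suc j)) (w \<bullet> y) * h w
        - a * ((if Suc (Suc j) \<le> s then poly (q (Suc (Suc j))) (w \<bullet> y) else 0) * g w)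
        - b * (poly (q (Suc j)) (w \<bullet> y) * g w))"
    unfolding inner_on_def sum_distrib_left
  proof (intro sum.cong refl)
    fix w assume w: "w \<in> X"
    have "w \<bullet> y * poly (q (Suc j)) (w \<bullet> y) =
      a * (if Suc (Suc j) \<le> s then poly (q (Suc (Suc j))) (w \<bullet> y) else 0) + b * poly (q (Suc j)) (w \<bullet> y)
      + c * poly (q j) (w \<bullet> y)" using rec inner_in_inner_set'[OF w y] by blast
    thus "c * (zero_ext X (\<lambda>w. poly (q j) (w \<bullet> y)) w * g w) = poly (q (Suc j)) (w \<bullet> y) * h w
      - a * ((if Suc (Suc j) \<le> s then poly (q (Suc (Suc j))) (w \<bullet> y) else 0) * g w)
      - b * (poly (q (Suc j)) (w \<bullet> y) * g w)"
      using w unfolding h_def zero_ext_def by (simp add: algebra_simps inner_commute)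
  qed
  also have "\<dots> = 0" using t1 t2 t3 by (simp add: sum_subtractf sum_distrib_left[symmetric])
  finally show ?thesis using c by simp
qed

text \<open>The column \<open>y\<close> of \<open>n P\<^sub>j\<close> is \<open>\<Sum>\<^sub>i\<^sub>\<le>\<^sub>j q\<^sub>i(\<cdot> \<bullet> y)\<close>; applying \<open>F\<^sub>j\<close> keeps exactly the summand \<open>q\<^sub>j\<close>.\<close>
lemma harm_is_q_step: "harm_is_q j"
  unfolding harm_is_q_def
proof (intro ballI)
  fix x y assume x: "x \<in> X" and y: "y \<in> X"
  define col where "col = (\<lambda>i. zero_ext X (\<lambda>w. poly (q i) (w \<bullet> y)))"
  have colP: "col i \<in> PolX X i" if "i \<le> s" for i
    unfolding col_def using PolX_zeta[OF fin y, of "q i" i] degree_q that by (simp add: inner_commute)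
  have F_col: "mat_app X (proj_harm j) (col i) = (if i = j then col j else (\<lambda>x. 0))" if "i \<le> j" for i
  proof (cases "i = j")
    case True
    thus ?thesis using proj_harm_fixes[OF colP] q_col_orth_lower[OF y] j unfolding col_def by auto
  next
    case False
    hence "i \<le> j - 1" using that by simp
    hence "col i \<in> PolX X (j - 1)" using PolX_mono colP[of i] that j by auto
    thus ?thesis using proj_harm_annihilates_lower[of j] that False by simp
  qed
  define u where "u = mat_app X (proj_pol j) (delta_at X y)"
  have u: "(\<lambda>z. n * u z) = (\<lambda>z. \<Sum>i\<le>j. col i z)"
  proof
    fix z show "n * u z = (\<Sum>i\<le>j. col i z)"
      using n_proj_pol_eq_sum_q[OF _ y, of z] mat_app_delta[OF fin y] unfolding u_def col_def zero_ext_def by auto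
  qed
  have "n * proj_harm j x y = n * mat_app X (proj_harm j) (delta_at X y) x" using mat_app_delta[OF fin y] x by simp
  also have "\<dots> = n * mat_app X (proj_harm j) u x" unfolding u_def by (simp add: proj_harm_proj_pol[OF delta_at_CX])
  also have "\<dots> = mat_app X (proj_harm j) (\<lambda>z. n * u z) x" by (simp add: mat_app_scale)
  also have "\<dots> = (\<Sum>i\<le>j. mat_app X (proj_harm j) (col i) x)" unfolding u by (simp add: mat_app_sum)
  also have "\<dots> = (\<Sum>i\<le>j. if i = j then col j x else 0)"
    using F_col by (intro sum.cong refl) auto
  also have "\<dots> = poly (q j) (x \<bullet> y)" using x by (simp add: col_def zero_ext_def)
  finally show "n * proj_harm j x y = poly (q j) (x \<bullet> y)" .
qed

end

lemma harm_is_q_all: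
  assumes "k \<le> s" shows "harm_is_q k"
proof -
  have "\<forall>k. j \<le> k \<and> k \<le> s \<longrightarrow> harm_is_q k" if "j \<le> s" for j
    using that
  proof (induction j rule: inc_induct)
    case base thus ?case using harm_is_q_s by auto
  next
    case (step j)
    thus ?case using harm_is_q_step[of j] by (metis Suc_leI le_neq_implies_less)
  qed
  thus ?thesis using assms by blast
qed

end

lemma pred_inner_diff_sq: "pred_inner (\<lambda>t. a t - b t) (\<lambda>t. a t - b t) = pred_inner a a - 2 * pred_inner a b + pred_inner b b"
  unfolding pred_inner_def
  by (simp add: algebra_simps sum_subtractf sum.distrib sum_distrib_left diff_divide_distrib add_divide_distrib)

lemma Q_polynomial_imp_proj_low_poly:
  assumes "Q_polynomial_scheme X s"
  obtains w where "degree w \<le> s - 1" "\<And>x y. x \<in> X \<Longrightarrow> y \<in> X \<Longrightarrow> n * proj_low x y = poly w (x \<bullet> y)"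
proof -
  have ex: "\<forall>i\<le>s. \<exists>v :: real poly. v \<noteq> 0 \<and> degree v = i \<and>
        (\<forall>x\<in>X. \<forall>y\<in>X. n * projF X i x y = poly v (n * projF X 1 x y))"
    using assms unfolding Q_polynomial_scheme_def by blast
  have "\<forall>i\<in>{..s}. \<exists>v. degree v = i \<and> (\<forall>x\<in>X. \<forall>y\<in>X. n * proj_harm i x y = poly v (x \<bullet> y))"
  proof
    fix i assume "i \<in> {..s}"
    hence "i \<le> s" by simp
    then obtain v where "degree v = i" and v: "\<forall>x\<in>X. \<forall>y\<in>X. n * projF X i x y = poly v (n * projF X 1 x y)"
      using ex by blast
    moreover have "\<forall>x\<in>X. \<forall>y\<in>X. n * proj_harm i x y = poly v (x \<bullet> y)"
    proof (intro ballI)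
      fix x y assume xy: "x \<in> X" "y \<in> X"
      have "n * proj_harm i x y = poly v (n * proj_harm 1 x y)" using v xy unfolding projF_eq by blast
      thus "n * proj_harm i x y = poly v (x \<bullet> y)" unfolding proj_harm_1[OF xy] .
    qed
    ultimately show "\<exists>v. degree v = i \<and> (\<forall>x\<in>X. \<forall>y\<in>X. n * proj_harm i x y = poly v (x \<bullet> y))" by blast
  qed
  from bchoice[OF this] obtain V
    where "\<forall>i\<in>{..s}. degree (V i) = i \<and> (\<forall>x\<in>X. \<forall>y\<in>X. n * proj_harm i x y = poly (V i) (x \<bullet> y))" ..
  hence V: "degree (V i) = i" "\<forall>x\<in>X. \<forall>y\<in>X. n * proj_harm i x y = poly (V i) (x \<bullet> y)" if "i \<le> s" for i
    using that by auto
  define w where "w = (\<Sum>i\<le>s - 1. V i)"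
  have "degree w \<le> s - 1" unfolding w_def by (intro degree_sum_le) (use V s_ge_1 in auto)
  moreover have "n * proj_low x y = poly w (x \<bullet> y)" if "x \<in> X" "y \<in> X" for x y
  proof -
    have "n * proj_low x y = (\<Sum>i\<le>s - 1. n * proj_harm i x y)"
      unfolding proj_pol_eq_sum_proj_harm by (simp add: sum_distrib_left)
    also have "\<dots> = (\<Sum>i\<le>s - 1. poly (V i) (x \<bullet> y))" using V that by (intro sum.cong refl) auto
    finally show ?thesis unfolding w_def poly_sum .
  qed
  ultimately show ?thesis by (rule that)
qed

text \<open>If \<open>n P\<^sub>s\<^sub>-\<^sub>1\<close> is a polynomial \<open>w\<close> of degree \<open>< s\<close> in the inner product, then
  \<open>0 \<le> \<langle>K - w, K - w\<rangle> = K(m) - tr P\<^sub>s\<^sub>-\<^sub>1\<close> by the reproducing property of \<open>K\<close>.\<close>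
lemma trace_le_kernel_poly_if_poly:
  assumes dw: "degree w \<le> s - 1" and Pw: "\<And>x y. x \<in> X \<Longrightarrow> y \<in> X \<Longrightarrow> n * proj_low x y = poly w (x \<bullet> y)"
  shows "traceX X proj_low \<le> poly kernel_poly (real CARD('m))"
proof -
  have T1: "traceX X proj_low = poly w (real CARD('m))"
  proof -
    have "traceX X proj_low = (\<Sum>x\<in>X. poly w (real CARD('m)) / n)"
      unfolding traceX_def using Pw inner_self n_pos by (intro sum.cong refl) (auto simp: field_simps)
    thus ?thesis using n_pos by simp
  qed
  have T2: "pred_inner (poly w) (poly w) = traceX X proj_low"
  proof -
    have "pred_inner (poly w) (poly w) = (\<Sum>x\<in>X. \<Sum>y\<in>X. (n * proj_low x y) * (n * proj_low x y)) / n\<^sup>2"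
      unfolding pred_inner_def using Pw by (intro arg_cong2[where f="(/)"] sum.cong refl) auto
    also have "\<dots> = (\<Sum>x\<in>X. \<Sum>y\<in>X. proj_low x y * proj_low x y)"
      using n_pos by (simp add: power2_eq_square algebra_simps sum_distrib_left[symmetric])
    also have "\<dots> = traceX X proj_low" unfolding traceX_def using sum_proj_pol_sq by simp
    finally show ?thesis .
  qed
  have T3: "pred_inner (poly kernel_poly) (poly w) = traceX X proj_low"
    using kernel_poly_reproduces[OF dw] T1 by (simp add: pred_inner_commute)
  have T4: "pred_inner (poly kernel_poly) (poly kernel_poly) = poly kernel_poly (real CARD('m))"
    by (rule kernel_poly_reproduces[OF kernel_poly_deg])
  have "0 \<le> pred_inner (\<lambda>t. poly kernel_poly t - poly w t) (\<lambda>t. poly kernel_poly t - poly w t)"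
    by (rule pred_inner_self_nonneg)
  thus ?thesis unfolding pred_inner_diff_sq T2 T3 T4 by simp
qed

lemma Q_polynomial_imp_trace_eq:
  assumes "Q_polynomial_scheme X s" shows "traceX X proj_low = poly kernel_poly (real CARD('m))"
proof -
  obtain w where "degree w \<le> s - 1" "\<And>x y. x \<in> X \<Longrightarrow> y \<in> X \<Longrightarrow> n * proj_low x y = poly w (x \<bullet> y)"
    using Q_polynomial_imp_proj_low_poly[OF assms] by blast
  hence "traceX X proj_low \<le> poly kernel_poly (real CARD('m))" by (rule trace_le_kernel_poly_if_poly)
  thus ?thesis using kernel_poly_le_trace by linarith
qed

definition harm_comb :: "(nat \<Rightarrow> real) \<Rightarrow> real^'m \<Rightarrow> real^'m \<Rightarrow> real" where
  "harm_comb c = (\<lambda>x y. \<Sum>i\<le>s. c i * proj_harm i x y)"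

lemma harm_comb_mult: "mat_mult X (harm_comb a) (harm_comb b) = harm_comb (\<lambda>i. a i * b i)"
proof (intro ext)
  fix x y
  have "mat_mult X (harm_comb a) (harm_comb b) x y = (\<Sum>z\<in>X. (\<Sum>i\<le>s. a i * proj_harm i x z) * (\<Sum>k\<le>s. b k * proj_harm k z y))"
    unfolding mat_mult_def harm_comb_def ..
  also have "\<dots> = (\<Sum>z\<in>X. \<Sum>i\<le>s. \<Sum>k\<le>s. a i * b k * (proj_harm i x z * proj_harm k z y))"
    by (simp add: sum_product algebra_simps)
  also have "\<dots> = (\<Sum>i\<le>s. \<Sum>z\<in>X. \<Sum>k\<le>s. a i * b k * (proj_harm i x z * proj_harm k z y))" by (rule sum.swap)
  also have "\<dots> = (\<Sum>i\<le>s. \<Sum>k\<le>s. \<Sum>z\<in>X. a i * b k * (proj_harm i x z * proj_harm k z y))"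
    by (intro sum.cong refl sum.swap)
  also have "\<dots> = (\<Sum>i\<le>s. \<Sum>k\<le>s. a i * b k * mat_mult X (proj_harm i) (proj_harm k) x y)"
    unfolding mat_mult_def by (simp add: sum_distrib_left)
  also have "\<dots> = (\<Sum>i\<le>s. \<Sum>k\<le>s. if k = i then a i * b i * proj_harm i x y else 0)"
    unfolding mat_mult_proj_harm by (intro sum.cong refl) auto
  also have "\<dots> = harm_comb (\<lambda>i. a i * b i) x y" unfolding harm_comb_def by simp
  finally show "mat_mult X (harm_comb a) (harm_comb b) x y = harm_comb (\<lambda>i. a i * b i) x y" .
qed

lemma harm_comb_add: "(\<lambda>x y. harm_comb a x y + harm_comb b x y) = harm_comb (\<lambda>i. a i + b i)"
  unfolding harm_comb_def by (simp add: algebra_simps sum.distrib)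

lemma harm_comb_indicator: "i \<le> s \<Longrightarrow> harm_comb (\<lambda>k. if k = i then 1 else 0) = proj_harm i"
proof (intro ext)
  fix x y assume i: "i \<le> s"
  have "(\<Sum>k\<le>s. (if k = i then 1 else 0) * proj_harm k x y) = (\<Sum>k\<le>s. if k = i then proj_harm i x y else 0)"
    by (intro sum.cong) auto
  thus "harm_comb (\<lambda>k. if k = i then 1 else 0) x y = proj_harm i x y" using i unfolding harm_comb_def by simp
qed

context
  assumes harm_q: "\<And>j. j \<le> s \<Longrightarrow> harm_is_q j"
begin

lemma harm_comb_in_bose_mesner: "harm_comb c \<in> bose_mesner X"
  unfolding bose_mesner_iff
proof (rule exI[of _ "\<lambda>t. (\<Sum>i\<le>s. c i * poly (q i) t) / n"], intro allI)
  fix x y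
  show "harm_comb c x y = (if x \<in> X \<and> y \<in> X then (\<Sum>i\<le>s. c i * poly (q i) (x \<bullet> y)) / n else 0)"
  proof (cases "x \<in> X \<and> y \<in> X")
    case True
    have "harm_comb c x y = (\<Sum>i\<le>s. c i * poly (q i) (x \<bullet> y) / n)"
      unfolding harm_comb_def
    proof (intro sum.cong refl)
      fix i assume "i \<in> {..s}"
      hence "n * proj_harm i x y = poly (q i) (x \<bullet> y)" using harm_q True unfolding harm_is_q_def by auto
      thus "c i * proj_harm i x y = c i * poly (q i) (x \<bullet> y) / n" using n_pos by (simp add: field_simps)
    qed
    thus ?thesis using True by (simp add: sum_divide_distrib)
  next
    case False thus ?thesis using is_matX_proj_harm unfolding harm_comb_def is_matX_def by auto
  qed
qed

lemma proj_harm_nonzero: "i \<le> s \<Longrightarrow> \<not> zero_matX X (proj_harm i)"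
proof
  assume i: "i \<le> s" and z: "zero_matX X (proj_harm i)"
  obtain \<alpha> where a: "\<alpha> \<in> inner_set' X" "poly (q i) \<alpha> \<noteq> 0"
    using poly_nonzero_on_inner_set'[OF q_nonzero[OF i]] degree_q[OF i] i by auto
  obtain x y where xy: "x \<in> X" "y \<in> X" "x \<bullet> y = \<alpha>"
    using a(1) ne inner_self unfolding inner_set'_def inner_set_def by auto
  have "n * proj_harm i x y = poly (q i) \<alpha>" using harm_q[OF i] xy unfolding harm_is_q_def by auto
  moreover have "proj_harm i x y = 0" using z xy unfolding zero_matX_def by auto
  ultimately show False using a by simp
qed

lemma bose_mesner_harm_comb: "M \<in> bose_mesner X \<Longrightarrow> \<exists>c. M = harm_comb c"
proof -
  assume "M \<in> bose_mesner X"
  then obtain \<phi> where phi: "\<And>x y. M x y = (if x \<in> X \<and> y \<in> X then \<phi> (x \<bullet> y) else 0)"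
    unfolding bose_mesner_iff by blast
  obtain e where e: "\<forall>\<alpha>\<in>inner_set' X. \<phi> \<alpha> = (\<Sum>i\<le>s. e i * poly (q i) \<alpha>)" using q_expansion by blast
  have "M = harm_comb (\<lambda>i. n * e i)"
  proof (intro ext)
    fix x y
    show "M x y = harm_comb (\<lambda>i. n * e i) x y"
    proof (cases "x \<in> X \<and> y \<in> X")
      case True
      have "M x y = (\<Sum>i\<le>s. e i * poly (q i) (x \<bullet> y))" using phi e True inner_in_inner_set' by simp
      also have "\<dots> = harm_comb (\<lambda>i. n * e i) x y" unfolding harm_comb_def
        using harm_q True unfolding harm_is_q_def by (intro sum.cong refl) (auto simp: algebra_simps)
      finally show ?thesis .
    next
      case False thus ?thesis using phi is_matX_proj_harm unfolding harm_comb_def is_matX_def by auto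
    qed
  qed
  thus ?thesis by blast
qed

lemma harm_comb_single: "j \<le> s \<Longrightarrow> harm_comb (\<lambda>i. c i * (if i = j then 1 else 0)) x y = c j * proj_harm j x y"
proof -
  assume j: "j \<le> s"
  have "harm_comb (\<lambda>i. c i * (if i = j then 1 else 0)) x y = (\<Sum>i\<le>s. if i = j then c j * proj_harm j x y else 0)"
    unfolding harm_comb_def by (intro sum.cong) auto
  thus ?thesis using j by simp
qed

lemma harm_comb_zero_iff: "zero_matX X (harm_comb c) \<longleftrightarrow> (\<forall>i\<le>s. c i = 0)"
proof
  assume z: "zero_matX X (harm_comb c)"
  show "\<forall>i\<le>s. c i = 0"
  proof (intro allI impI)
    fix j assume j: "j \<le> s"
    have "\<forall>x\<in>X. \<forall>y\<in>X. c j * proj_harm j x y = 0"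
    proof (intro ballI)
      fix x y assume x: "x \<in> X" and y: "y \<in> X"
      have "mat_mult X (harm_comb c) (harm_comb (\<lambda>k. if k = j then 1 else 0)) x y = 0"
        unfolding mat_mult_def using z x unfolding zero_matX_def by simp
      thus "c j * proj_harm j x y = 0" unfolding harm_comb_mult harm_comb_single[OF j] .
    qed
    thus "c j = 0" using proj_harm_nonzero[OF j] unfolding zero_matX_def by auto
  qed
next
  assume "\<forall>i\<le>s. c i = 0"
  thus "zero_matX X (harm_comb c)" unfolding zero_matX_def harm_comb_def by simp
qed

lemma harm_comb_eq_iff: "harm_comb a = harm_comb b \<longleftrightarrow> (\<forall>i\<le>s. a i = b i)"
proof
  assume e: "harm_comb a = harm_comb b"
  have "zero_matX X (harm_comb (\<lambda>i. a i - b i))"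
    unfolding zero_matX_def
  proof (intro ballI)
    fix x y
    have "harm_comb (\<lambda>i. a i - b i) x y = harm_comb a x y - harm_comb b x y"
      unfolding harm_comb_def by (simp add: algebra_simps sum_subtractf)
    thus "harm_comb (\<lambda>i. a i - b i) x y = 0" using e by simp
  qed
  thus "\<forall>i\<le>s. a i = b i" unfolding harm_comb_zero_iff by simp
next
  assume "\<forall>i\<le>s. a i = b i"
  thus "harm_comb a = harm_comb b" unfolding harm_comb_def by (intro ext sum.cong) auto
qed

lemma idempotent_BM_iff: "idempotent_BM X E \<longleftrightarrow> (\<exists>c. E = harm_comb c \<and> (\<forall>i\<le>s. c i = 0 \<or> c i = 1) \<and> (\<exists>i\<le>s. c i = 1))"
proof
  assume E: "idempotent_BM X E"
  then obtain c where c: "E = harm_comb c" using bose_mesner_harm_comb unfolding idempotent_BM_def by blast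
  have "harm_comb (\<lambda>i. c i * c i) = harm_comb c" using E c harm_comb_mult unfolding idempotent_BM_def by simp
  hence cc: "\<forall>i\<le>s. c i * c i = c i" unfolding harm_comb_eq_iff .
  hence c01: "\<forall>i\<le>s. c i = 0 \<or> c i = 1" by (metis mult_cancel_right1 mult_zero_left)
  have "\<not> (\<forall>i\<le>s. c i = 0)" using E c harm_comb_zero_iff unfolding idempotent_BM_def by blast
  then obtain i where "i \<le> s" "c i \<noteq> 0" by blast
  thus "\<exists>c. E = harm_comb c \<and> (\<forall>i\<le>s. c i = 0 \<or> c i = 1) \<and> (\<exists>i\<le>s. c i = 1)"
    using c c01 by blast
next
  assume "\<exists>c. E = harm_comb c \<and> (\<forall>i\<le>s. c i = 0 \<or> c i = 1) \<and> (\<exists>i\<le>s. c i = 1)"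
  then obtain c i where c: "E = harm_comb c" "\<forall>i\<le>s. c i = 0 \<or> c i = 1" and i: "i \<le> s" "c i = 1" by blast
  have "E \<in> bose_mesner X" unfolding c by (rule harm_comb_in_bose_mesner)
  moreover have "\<not> zero_matX X E" unfolding c harm_comb_zero_iff using i by auto
  moreover have "mat_mult X E E = E"
    unfolding c harm_comb_mult harm_comb_eq_iff using c(2) by auto
  ultimately show "idempotent_BM X E" unfolding idempotent_BM_def by blast
qed

lemma proj_harm_idempotent: "i \<le> s \<Longrightarrow> idempotent_BM X (proj_harm i)"
  unfolding idempotent_BM_iff by (rule exI[of _ "\<lambda>k. if k = i then 1 else 0"]) (auto simp: harm_comb_indicator)

lemma primitive_idempotent_proj_harm: assumes i: "i \<le> s" shows "primitive_idempotent X (proj_harm i)"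
  unfolding primitive_idempotent_def
proof (intro conjI notI)
  show "idempotent_BM X (proj_harm i)" by (rule proj_harm_idempotent[OF i])
  assume "\<exists>E1 E2. idempotent_BM X E1 \<and> idempotent_BM X E2 \<and> zero_matX X (mat_mult X E1 E2) \<and>
           proj_harm i = (\<lambda>x y. E1 x y + E2 x y)"
  then obtain E1 E2 where E: "idempotent_BM X E1" "idempotent_BM X E2" "proj_harm i = (\<lambda>x y. E1 x y + E2 x y)" by blast
  obtain a where a: "E1 = harm_comb a" "\<forall>k\<le>s. a k = 0 \<or> a k = 1" "\<exists>k\<le>s. a k = 1" using E(1) idempotent_BM_iff by blast
  obtain b where b: "E2 = harm_comb b" "\<forall>k\<le>s. b k = 0 \<or> b k = 1" "\<exists>k\<le>s. b k = 1" using E(2) idempotent_BM_iff by blast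
  have "harm_comb (\<lambda>k. if k = i then 1 else 0) = harm_comb (\<lambda>k. a k + b k)"
    using E(3) harm_comb_indicator[OF i] harm_comb_add[of a b] a(1) b(1) by simp
  hence ab: "\<forall>k\<le>s. (if k = i then 1 else 0) = a k + b k" unfolding harm_comb_eq_iff .
  obtain k where k: "k \<le> s" "a k = 1" using a(3) by blast
  obtain k' where k': "k' \<le> s" "b k' = 1" using b(3) by blast
  have "k = i" using ab k b(2) by (metis add_cancel_right_right one_neq_zero zero_neq_one add_nonneg_eq_0_iff zero_le_one order_refl)
  moreover have "k' = i" using ab k' a(2) by (metis add_cancel_left_left one_neq_zero add_nonneg_eq_0_iff zero_le_one order_refl)
  ultimately show False using ab k k' by force
qed

lemma primitive_idempotent_imp_proj_harm: assumes P: "primitive_idempotent X E" shows "\<exists>i\<le>s. E = proj_harm i"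
proof -
  have E: "idempotent_BM X E" using P unfolding primitive_idempotent_def by blast
  obtain c i where c: "E = harm_comb c" "\<forall>k\<le>s. c k = 0 \<or> c k = 1" and i: "i \<le> s" "c i = 1"
    using E idempotent_BM_iff by blast
  have "\<forall>k\<le>s. k \<noteq> i \<longrightarrow> c k = 0"
  proof (rule ccontr)
    assume "\<not> ?thesis"
    then obtain k where k: "k \<le> s" "k \<noteq> i" "c k = 1" using c(2) by blast
    define E1 where "E1 = harm_comb (\<lambda>j. if j = i then 1 else 0)"
    define E2 where "E2 = harm_comb (c(i := 0))"
    have I1: "idempotent_BM X E1" unfolding E1_def idempotent_BM_iff using i by (intro exI[of _ "\<lambda>j. if j = i then 1 else 0"]) auto
    have I2: "idempotent_BM X E2" unfolding E2_def idempotent_BM_iff using c(2) k by (intro exI[of _ "c(i := 0)"]) auto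
    have Z: "zero_matX X (mat_mult X E1 E2)" unfolding E1_def E2_def harm_comb_mult harm_comb_zero_iff by simp
    have S: "E = (\<lambda>x y. E1 x y + E2 x y)"
      unfolding E1_def E2_def harm_comb_add c(1) harm_comb_eq_iff using i by auto
    show False using P I1 I2 Z S unfolding primitive_idempotent_def by blast
  qed
  hence "E = harm_comb (\<lambda>j. if j = i then 1 else 0)" unfolding c(1) harm_comb_eq_iff using i by auto
  thus ?thesis using harm_comb_indicator[OF i(1)] i by auto
qed

lemma proj_harm_eq_primitive_idempotents: "{projF X i |i. i \<le> s} = {E. primitive_idempotent X E}"
  unfolding projF_eq using primitive_idempotent_proj_harm primitive_idempotent_imp_proj_harm by blast

lemma Q_polynomial_schemeI: "Q_polynomial_scheme X s"
  unfolding Q_polynomial_scheme_def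
proof (intro conjI allI impI)
  show "sym_assoc_scheme X"
  proof (rule sym_assoc_schemeI)
    fix \<alpha> \<beta>
    obtain a b where "adjX X \<alpha> = harm_comb a" "adjX X \<beta> = harm_comb b"
      using bose_mesner_harm_comb[OF adjX_in_bose_mesner] by metis
    thus "mat_mult X (adjX X \<alpha>) (adjX X \<beta>) \<in> bose_mesner X"
      by (simp add: harm_comb_mult harm_comb_in_bose_mesner)
  qed
  fix i assume i: "i \<le> s"
  show "\<exists>v. v \<noteq> 0 \<and> degree v = i \<and>
      (\<forall>x\<in>X. \<forall>y\<in>X. real (card X) * projF X i x y = poly v (real (card X) * projF X 1 x y))"
    by (rule exI[of _ "q i"]) (use i q_nonzero degree_q harm_q[OF i] proj_harm_1 in \<open>auto simp: projF_eq harm_is_q_def\<close>)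
qed (rule proj_harm_eq_primitive_idempotents)

end

lemma trace_eq_iff_Q_polynomial: "traceX X (projF X s) = poly (q s) (real CARD('m)) \<longleftrightarrow> Q_polynomial_scheme X s"
proof
  assume "traceX X (projF X s) = poly (q s) (real CARD('m))"
  hence "\<forall>x\<in>X. \<forall>y\<in>X. n * proj_low x y = poly kernel_poly (x \<bullet> y)" unfolding trace_proj_harm_eq_iff trace_eq_kernel_poly_iff .
  hence "\<And>j. j \<le> s \<Longrightarrow> harm_is_q j" by (rule harm_is_q_all)
  thus "Q_polynomial_scheme X s" by (rule Q_polynomial_schemeI)
next
  assume "Q_polynomial_scheme X s"
  thus "traceX X (projF X s) = poly (q s) (real CARD('m))" unfolding trace_proj_harm_eq_iff by (rule Q_polynomial_imp_trace_eq)
qed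

end

lemma predegree_polys_nonempty:
  fixes X :: "(real^'m) set"
  assumes "card (inner_set X) = s" "predegree_polys X s q" shows "X \<noteq> {}"
proof
  assume X: "X = {}"
  hence s0: "s = 0" using assms(1) unfolding inner_set_def by simp
  have q0: "q 0 \<noteq> 0" "degree (q 0) = 0" and
    ip: "pred_ip X (q 0) (q 0) = poly (q 0) (real CARD('m))"
    using assms(2) s0 unfolding predegree_polys_def by auto
  have "pred_ip X (q 0) (q 0) = 0" unfolding pred_ip_def X by simp
  hence "poly (q 0) (real CARD('m)) = 0" using ip by simp
  moreover have "poly (q 0) (real CARD('m)) = coeff (q 0) 0" using poly_eq_sum_upto[of "q 0" 0] q0 by simp
  moreover have "coeff (q 0) 0 \<noteq> 0" using q0 leading_coeff_0_iff[of "q 0"] by simp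
  ultimately show False by simp
qed

theorem theorem4p1:
  fixes X :: "(real^'m) set" and s :: nat and q :: "nat \<Rightarrow> real poly"
  assumes "finite X"
    and "\<forall>x\<in>X. x \<bullet> x = real CARD('m)"
    and "spherical_2_design X"
    and "card (inner_set X) = s"
    and "design_degree X = s"
    and "predegree_polys X s q"
  shows "traceX X (projF X s) = (\<Sum>x\<in>X. real (card X) * projF X s x x) / real (card X)
       \<and> traceX X (projF X s) \<le> poly (q s) (real CARD('m))
       \<and> (traceX X (projF X s) = poly (q s) (real CARD('m)) \<longleftrightarrow> Q_polynomial_scheme X s)"
proof -
  have ne: "X \<noteq> {}" by (rule predegree_polys_nonempty[OF assms(4,6)])
  interpret sph_2_design_pred X s q
    by unfold_locales (use assms(1-4,6) ne in auto)
  have "traceX X (projF X s) = (\<Sum>x\<in>X. real (card X) * projF X s x x) / real (card X)"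
    unfolding traceX_def using n_pos by (simp add: sum_distrib_left[symmetric])
  thus ?thesis using trace_proj_harm_le trace_eq_iff_Q_polynomial by blast
qed

end
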